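(* Define for integers $N\ge1$ $$\theta_1(N) = \frac{2^{\omega(N)}\sqrt{N}}{\psi(N)},\quad \theta_2(N) = \frac{(2^{\omega(N)})^2}{\psi(N)},\quad \theta_3(N)=\frac{2^{\omega(N)}}{\psi(N)}.$$ Then $\theta_i(N)\to 0$ as $N\to\infty$ for $i=1,2,3$. Moreover, for all $N$ at least the given threshold, the following bounds hold: $N\ge 1$: $\theta_1\le 1.00$, $\theta_2\le 1.34$, $\theta_3\le 1.00$; $N\ge 43$: $\theta_1\le 0.465$, $\theta_2\le 0.445$, $\theta_3\le 0.0556$; $N\ge 571$: $\theta_1\le 0.257$, $\theta_2\le 0.149$, $\theta_3\le 0.00926$; $N\ge 8800$: $\theta_1\le 0.133$, $\theta_2\le 0.0424$, $\theta_3\le 0.00133$; $N\ge 150000$: $\theta_1\le 0.0607$, $\theta_2\le 0.00941$, $\theta_3\le 0.000147$; $N\ge 2700000$: $\theta_1\le 0.0265$, $\theta_2\le 0.00189$, $\theta_3\le 0.000015$; $N\ge 63000000$: $\theta_1\le 0.0106$, $\theta_2\le 0.000314$, $\theta_3\le 0.000015$.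
   Context: $\psi(N) = N\prod_{p\mid N}(1+1/p)$ (product over primes dividing $N$), the index of $\Gamma_0(N)$ in $\mathrm{SL}_2(\mathbb{Z})$; $\omega(N)$ is the number of distinct prime divisors of $N$. *)

theory Defs
  imports "HOL-Analysis.Analysis" "HOL-Computational_Algebra.Primes"
begin

definition omega :: "nat \<Rightarrow> nat" where
  "omega N = card (prime_factors N)"

definition psi :: "nat \<Rightarrow> real" where
  "psi N = real N * (\<Prod>p\<in>prime_factors N. (1 + 1 / real p))"

definition theta1 :: "nat \<Rightarrow> real" where
  "theta1 N = 2 ^ omega N * sqrt (real N) / psi N"

definition theta2 :: "nat \<Rightarrow> real" where
  "theta2 N = (2 ^ omega N) ^ 2 / psi N"

definition theta3 :: "nat \<Rightarrow> real" where
  "theta3 N = 2 ^ omega N / psi N"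

end

theory Submission
  imports Defs
begin

text \<open>
  With theta K e N = K^\<omega>(N) / (N P^e), where P is the product of 1 + 1/p over the primes
  p dividing N, we have theta3 = theta 2 1, theta2 = theta 4 1 and theta1^2 = theta 4 2.
  Since c^\<omega>(N) \<le> c^c N (each prime factor p \<ge> c of N accounts for a factor c \<le> p,
  and there are at most c others), (theta K e N)^2 \<le> K^(2K^2) / N, which tends to 0.

  For e \<ge> 1, theta K e N is at most the product of K / (p + 1) over the primes p dividing N,
  so prime factors p \<ge> K - 1 can only decrease it, and adjoining a new prime power q^a to N
  multiplies it by K q^e / (q^a (q + 1)^e). The explicit bounds are checked by finite
  branch-and-bound certificates that branch on the exponents of the primes below 100 in
  increasing order and close a branch by counting the remaining prime factors: many of them make
  theta small because each is at least the next prime in line, few of them make it small because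
  the remaining cofactor of N is then large.
\<close>

definition psi_factor :: "nat \<Rightarrow> real" where
  "psi_factor N = (\<Prod>p\<in>prime_factors N. 1 + 1 / real p)"

definition theta :: "nat \<Rightarrow> nat \<Rightarrow> nat \<Rightarrow> real" where
  "theta K e N = real K ^ omega N / (real N * psi_factor N ^ e)"

lemma psi_factor_ge_1: "1 \<le> psi_factor N"
  unfolding psi_factor_def by (rule prod_ge_1) auto

lemma theta_nonneg: "0 \<le> theta K e N"
  using psi_factor_ge_1[of N] by (simp add: theta_def)

lemma theta3_eq_theta: "theta3 = theta 2 1"
  by (simp add: fun_eq_iff theta3_def theta_def psi_def psi_factor_def)

lemma theta2_eq_theta: "theta2 = theta 4 1"
  by (simp add: fun_eq_iff theta2_def theta_def psi_def psi_factor_def power2_eq_square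
      flip: power_mult_distrib)

lemma theta1_eq_sqrt_theta:
  assumes "0 < N"
  shows "theta1 N = sqrt (theta 4 2 N)"
proof -
  have "theta 4 2 N = (2 ^ omega N / (sqrt (real N) * psi_factor N)) ^ 2"
    using assms by (simp add: theta_def power_divide power2_eq_square flip: power_mult_distrib)
  moreover have "theta1 N = 2 ^ omega N / (sqrt (real N) * psi_factor N)"
    using assms psi_factor_ge_1[of N]
    by (simp add: theta1_def psi_def psi_factor_def divide_simps)
  ultimately show ?thesis
    using psi_factor_ge_1[of N] by simp
qed

lemma prod_prime_factors_le:
  fixes n :: nat
  assumes "0 < n"
  shows "\<Prod>(prime_factors n) \<le> n"
proof -
  have "\<Prod>(prime_factors n) \<le> (\<Prod>p\<in>prime_factors n. p ^ multiplicity p n)"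
    by (intro prod_mono conjI self_le_power)
       (auto simp: prime_factors_multiplicity prime_gt_0_nat Suc_leI)
  also have "\<dots> = n"
    using prod_prime_factors[of n] assms by simp
  finally show ?thesis .
qed

lemma prod_Suc_prime_factors_le:
  assumes "0 < N"
  shows "(\<Prod>p\<in>prime_factors N. real p + 1) \<le> real N * psi_factor N"
proof -
  have "(\<Prod>p\<in>prime_factors N. real p + 1) = (\<Prod>p\<in>prime_factors N. real p * (1 + 1 / real p))"
    by (rule prod.cong) (auto simp: field_simps dest!: in_prime_factors_imp_prime prime_gt_0_nat)
  also have "\<dots> = real (\<Prod>(prime_factors N)) * psi_factor N"
    by (simp add: psi_factor_def prod.distrib of_nat_prod)
  also have "\<dots> \<le> real N * psi_factor N"
    using prod_prime_factors_le[OF assms] psi_factor_ge_1[of N]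
    by (intro mult_right_mono) (auto simp flip: of_nat_prod)
  finally show ?thesis .
qed

lemma theta_le_omega_div: "theta K e N \<le> real K ^ omega N / real N"
proof (cases "N = 0")
  case False
  have "real N \<le> real N * psi_factor N ^ e"
    using one_le_power[OF psi_factor_ge_1, of N e] by (simp add: mult_le_cancel_left1)
  with False show ?thesis
    unfolding theta_def by (intro divide_left_mono) auto
qed (simp add: theta_def)

lemma theta_le_prod_Suc:
  assumes "0 < N" "1 \<le> e"
  shows "theta K e N \<le> real K ^ omega N / (\<Prod>p\<in>prime_factors N. real p + 1)"
proof -
  have "psi_factor N \<le> psi_factor N ^ e"
    using psi_factor_ge_1[of N] assms(2) by (intro self_le_power) auto
  then have "(\<Prod>p\<in>prime_factors N. real p + 1) \<le> real N * psi_factor N ^ e"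
    using prod_Suc_prime_factors_le[OF assms(1)] by (meson mult_left_mono of_nat_0_le_iff order_trans)
  moreover have "0 < (\<Prod>p\<in>prime_factors N. real p + 1)"
    by (rule prod_pos) auto
  ultimately show ?thesis
    unfolding theta_def by (intro divide_left_mono) auto
qed

lemma theta_le_1:
  assumes "0 < N" "1 \<le> e" "\<forall>p\<in>prime_factors N. K \<le> p + 1"
  shows "theta K e N \<le> 1"
proof -
  have "real K ^ omega N = (\<Prod>p\<in>prime_factors N. real K)"
    by (simp add: omega_def)
  also have "\<dots> \<le> (\<Prod>p\<in>prime_factors N. real p + 1)"
    using assms(3) by (intro prod_mono) auto
  finally have "real K ^ omega N / (\<Prod>p\<in>prime_factors N. real p + 1) \<le> 1"
    by (simp add: divide_le_eq prod_pos)
  with theta_le_prod_Suc[OF assms(1,2), of K] show ?thesis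
    by linarith
qed

section \<open>Decay of \<theta>\<close>

lemma pow_omega_le:
  fixes c N :: nat
  assumes "1 \<le> c" "0 < N"
  shows "c ^ omega N \<le> c ^ c * N"
proof -
  let ?S = "prime_factors N"
  let ?g = "\<lambda>p. if p \<in> {..<c} then c else 1"
  have "c ^ omega N = (\<Prod>p\<in>?S. c)"
    by (simp add: omega_def)
  also have "\<dots> \<le> (\<Prod>p\<in>?S. ?g p * p)"
    by (rule prod_mono) (auto simp: Suc_le_eq dest: in_prime_factors_imp_prime prime_gt_0_nat)
  also have "\<dots> = (\<Prod>p\<in>?S. ?g p) * \<Prod>?S"
    by (simp add: prod.distrib)
  also have "\<dots> \<le> c ^ c * N"
  proof (rule mult_le_mono)
    have "(\<Prod>p\<in>?S. ?g p) = c ^ card (?S \<inter> {..<c})"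
      using prod.inter_restrict[of ?S "\<lambda>_. c" "{..<c}"] by simp
    also have "\<dots> \<le> c ^ c"
      using card_mono[of "{..<c}" "?S \<inter> {..<c}"] assms(1) by (intro power_increasing) auto
    finally show "(\<Prod>p\<in>?S. ?g p) \<le> c ^ c" .
    show "\<Prod>?S \<le> N"
      by (rule prod_prime_factors_le[OF assms(2)])
  qed
  finally show ?thesis .
qed

lemma theta_squared_le:
  assumes "1 \<le> K" "0 < N"
  shows "theta K e N ^ 2 \<le> real ((K ^ 2) ^ K ^ 2) / real N"
proof -
  have "theta K e N ^ 2 \<le> (real K ^ omega N / real N) ^ 2"
    using theta_le_omega_div theta_nonneg by (intro power_mono)
  also have "\<dots> = real ((K ^ 2) ^ omega N) / (real N * real N)"
    by (simp add: power_divide power2_eq_square flip: power_mult_distrib)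
  also have "\<dots> \<le> real ((K ^ 2) ^ K ^ 2 * N) / (real N * real N)"
    using pow_omega_le[of "K ^ 2" N] assms by (intro divide_right_mono of_nat_mono) auto
  also have "\<dots> = real ((K ^ 2) ^ K ^ 2) / real N"
    using assms(2) by simp
  finally show ?thesis .
qed

lemma theta_tendsto_0:
  assumes "1 \<le> K"
  shows "theta K e \<longlonglongrightarrow> 0"
proof -
  have "(\<lambda>N. theta K e N ^ 2) \<longlonglongrightarrow> 0"
  proof (rule tendsto_sandwich[of "\<lambda>_. 0" _ _ "\<lambda>N. real ((K ^ 2) ^ K ^ 2) / real N"])
    show "\<forall>\<^sub>F N in sequentially. theta K e N ^ 2 \<le> real ((K ^ 2) ^ K ^ 2) / real N"
      using eventually_gt_at_top[of 0] by eventually_elim (rule theta_squared_le[OF assms])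
  qed (auto intro: lim_const_over_n)
  then have "(\<lambda>N. sqrt (theta K e N ^ 2)) \<longlonglongrightarrow> sqrt 0"
    by (rule tendsto_real_sqrt)
  then show ?thesis
    using theta_nonneg by simp
qed

lemma theta_limits: "theta1 \<longlonglongrightarrow> 0 \<and> theta2 \<longlonglongrightarrow> 0 \<and> theta3 \<longlonglongrightarrow> 0"
proof (intro conjI)
  have "(\<lambda>N. sqrt (theta 4 2 N)) \<longlonglongrightarrow> sqrt 0"
    by (intro tendsto_real_sqrt theta_tendsto_0) simp
  moreover have "\<forall>\<^sub>F N in sequentially. sqrt (theta 4 2 N) = theta1 N"
    using eventually_gt_at_top[of 0] by eventually_elim (simp add: theta1_eq_sqrt_theta)
  ultimately show "theta1 \<longlonglongrightarrow> 0"
    by (simp add: Lim_transform_eventually)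
  show "theta2 \<longlonglongrightarrow> 0" "theta3 \<longlonglongrightarrow> 0"
    by (simp_all add: theta2_eq_theta theta3_eq_theta theta_tendsto_0)
qed

section \<open>Branch-and-bound certificates\<close>

datatype certificate = Omega_Cut nat | Branch "certificate list"

text \<open>
  If L = q # ps lists consecutive primes, cert_ok K e T c L A B N0 certifies
  A * theta K e M \<le> B for all M > 0 whose prime factors are \<ge> q and with N0 * M \<ge> T
  (lemma cert_ok_sound). Omega_Cut j separates \<omega>(M) \<ge> j, handled by the first j entries
  of L, from \<omega>(M) \<le> j - 1, handled by M \<ge> T / N0 (for j = 1 this means M = 1).
  Branch cs separates the exponent a of q in M: child number a treats the cofactor M / q^a, where
  for a > 0 the bound is rescaled by the factor K q^e / (q^a (q + 1)^e) that theta gains from q^a,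
  and N0 by q^a. All a \<ge> length cs are treated at once, as theta of the cofactor is at most 1:
  its prime factors p satisfy K \<le> q + 2 \<le> p + 1.
\<close>

fun cert_ok :: "nat \<Rightarrow> nat \<Rightarrow> nat \<Rightarrow> certificate \<Rightarrow> nat list \<Rightarrow> nat \<Rightarrow> nat \<Rightarrow> nat \<Rightarrow> bool"
and branches_ok :: "nat \<Rightarrow> nat \<Rightarrow> nat \<Rightarrow> certificate list \<Rightarrow> nat \<Rightarrow> nat list \<Rightarrow> nat \<Rightarrow> nat \<Rightarrow> nat
    \<Rightarrow> nat \<Rightarrow> bool" where
  "cert_ok K e T c [] A B N0 \<longleftrightarrow> False"
| "cert_ok K e T (Omega_Cut j) (q # ps) A B N0 \<longleftrightarrow>
     K \<le> Suc q \<and> j \<le> Suc (length ps) \<and>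
     A * K ^ j \<le> B * prod_list (map Suc (take j (q # ps))) \<and>
     (case j of 0 \<Rightarrow> True | Suc 0 \<Rightarrow> N0 < T | Suc i \<Rightarrow> A * K ^ i * N0 \<le> B * T)"
| "cert_ok K e T (Branch cs) (q # ps) A B N0 \<longleftrightarrow> branches_ok K e T cs q ps A B N0 0"
| "branches_ok K e T [] q ps A B N0 a \<longleftrightarrow>
     0 < a \<and> K \<le> q + 2 \<and> A * K * q ^ e \<le> B * q ^ a * Suc q ^ e"
| "branches_ok K e T (c # cs) q ps A B N0 a \<longleftrightarrow>
     (if a = 0 then cert_ok K e T c ps A B N0
      else cert_ok K e T c ps (A * K * q ^ e) (B * q ^ a * Suc q ^ e) (N0 * q ^ a)) \<and>
     branches_ok K e T cs q ps A B N0 (Suc a)"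

fun consecutive_primes :: "nat list \<Rightarrow> bool" where
  "consecutive_primes [] \<longleftrightarrow> True"
| "consecutive_primes [p] \<longleftrightarrow> prime p"
| "consecutive_primes (p # q # ps) \<longleftrightarrow>
     prime p \<and> p < q \<and> (\<forall>x\<in>set [Suc p..<q]. \<not> prime x) \<and> consecutive_primes (q # ps)"

definition small_primes :: "nat list" where
  "small_primes = [2, 3, 5, 7, 11, 13, 17, 19, 23, 29, 31, 37, 41, 43, 47, 53, 59, 61, 67, 71, 73,
    79, 83, 89, 97]"

lemma consecutive_primes_small_primes: "consecutive_primes small_primes"
  by code_simp

definition theta1_cert_1 :: certificate where
  "theta1_cert_1 = Branch [Omega_Cut 0]"

lemma theta1_cert_1_ok: "cert_ok 4 2 1 theta1_cert_1 small_primes 1 1 1"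
  by (simp add: theta1_cert_1_def small_primes_def)

definition theta2_cert_1 :: certificate where
  "theta2_cert_1 = Branch [Omega_Cut 0]"

lemma theta2_cert_1_ok: "cert_ok 4 1 1 theta2_cert_1 small_primes 50 67 1"
  by (simp add: theta2_cert_1_def small_primes_def)

definition theta3_cert_1 :: certificate where
  "theta3_cert_1 = Omega_Cut 0"

lemma theta3_cert_1_ok: "cert_ok 2 1 1 theta3_cert_1 small_primes 1 1 1"
  by (simp add: theta3_cert_1_def small_primes_def)

definition theta1_cert_43 :: certificate where
  "theta1_cert_43 = Branch [Branch [Branch [Omega_Cut 2, Branch [Omega_Cut 1, Omega_Cut 1]], Branch
    [Omega_Cut 2, Omega_Cut 1], Omega_Cut 1], Branch [Branch [Omega_Cut 2, Branch [Omega_Cut 1]],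
    Branch [Branch [Branch [Omega_Cut 1], Omega_Cut 1], Omega_Cut 1], Omega_Cut 1], Branch
    [Omega_Cut 2, Branch [Omega_Cut 1]], Omega_Cut 2]"

lemma theta1_cert_43_ok: "cert_ok 4 2 43 theta1_cert_43 small_primes 40000 8649 1"
  by (simp add: theta1_cert_43_def small_primes_def)

definition theta2_cert_43 :: certificate where
  "theta2_cert_43 = Branch [Omega_Cut 3, Branch [Omega_Cut 2, Branch [Branch [Omega_Cut 1,
    Omega_Cut 1], Omega_Cut 1]], Omega_Cut 2]"

lemma theta2_cert_43_ok: "cert_ok 4 1 43 theta2_cert_43 small_primes 200 89 1"
  by (simp add: theta2_cert_43_def small_primes_def)

definition theta3_cert_43 :: certificate where
  "theta3_cert_43 = Branch [Branch [Branch [Omega_Cut 2, Branch [Omega_Cut 1, Omega_Cut 1],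
    Omega_Cut 1], Branch [Branch [Branch [Branch [Omega_Cut 1, Omega_Cut 1], Omega_Cut 1],
    Omega_Cut 1], Omega_Cut 1], Omega_Cut 1], Branch [Branch [Branch [Branch [Branch [Branch [Branch
    [Omega_Cut 1, Omega_Cut 1], Omega_Cut 1], Omega_Cut 1], Omega_Cut 1], Omega_Cut 1],
    Omega_Cut 1], Branch [Branch [Omega_Cut 1, Omega_Cut 1], Omega_Cut 1], Omega_Cut 1], Branch
    [Branch [Branch [Omega_Cut 1, Omega_Cut 1], Omega_Cut 1], Omega_Cut 1], Branch [Omega_Cut 1,
    Omega_Cut 1], Omega_Cut 1]"

lemma theta3_cert_43_ok: "cert_ok 2 1 43 theta3_cert_43 small_primes 2500 139 1"
  by (simp add: theta3_cert_43_def small_primes_def)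

definition theta1_cert_571 :: certificate where
  "theta1_cert_571 = Branch [Branch [Branch [Omega_Cut 3, Branch [Omega_Cut 2, Omega_Cut 2],
    Omega_Cut 2], Branch [Omega_Cut 3, Branch [Omega_Cut 2, Omega_Cut 1], Omega_Cut 1], Omega_Cut 3,
    Omega_Cut 2], Branch [Branch [Omega_Cut 3, Branch [Omega_Cut 2, Branch [Omega_Cut 1]],
    Omega_Cut 2], Branch [Branch [Omega_Cut 2, Branch [Branch [Omega_Cut 1, Omega_Cut 1],
    Omega_Cut 1]], Branch [Branch [Branch [Branch [Branch [Omega_Cut 1, Omega_Cut 1], Omega_Cut 1],
    Omega_Cut 1], Omega_Cut 1], Omega_Cut 1], Omega_Cut 1], Branch [Omega_Cut 2, Omega_Cut 1],
    Omega_Cut 2], Branch [Omega_Cut 3, Branch [Omega_Cut 2, Branch [Omega_Cut 1, Omega_Cut 1]],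
    Omega_Cut 2], Branch [Omega_Cut 3, Omega_Cut 2], Omega_Cut 3]"

lemma theta1_cert_571_ok: "cert_ok 4 2 571 theta1_cert_571 small_primes 1000000 66049 1"
  by (simp add: theta1_cert_571_def small_primes_def)

definition theta2_cert_571 :: certificate where
  "theta2_cert_571 = Branch [Omega_Cut 4, Branch [Omega_Cut 3, Branch [Branch [Omega_Cut 2, Branch
    [Branch [Omega_Cut 1, Omega_Cut 1], Omega_Cut 1]], Branch [Branch [Branch [Branch [Branch
    [Omega_Cut 1, Omega_Cut 1], Omega_Cut 1], Omega_Cut 1], Omega_Cut 1], Omega_Cut 1],
    Omega_Cut 1], Omega_Cut 2], Branch [Omega_Cut 3, Branch [Omega_Cut 2, Branch [Omega_Cut 1,
    Omega_Cut 1]], Omega_Cut 2], Omega_Cut 3, Omega_Cut 3]"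

lemma theta2_cert_571_ok: "cert_ok 4 1 571 theta2_cert_571 small_primes 1000 149 1"
  by (simp add: theta2_cert_571_def small_primes_def)

definition theta3_cert_571 :: certificate where
  "theta3_cert_571 = Branch [Branch [Branch [Omega_Cut 3, Branch [Omega_Cut 2, Branch [Branch
    [Omega_Cut 1, Omega_Cut 1], Omega_Cut 1], Omega_Cut 1], Omega_Cut 2, Omega_Cut 1], Branch
    [Branch [Branch [Omega_Cut 2, Branch [Omega_Cut 1, Omega_Cut 1]], Omega_Cut 2, Omega_Cut 1],
    Omega_Cut 2, Omega_Cut 1], Branch [Omega_Cut 2, Omega_Cut 2, Omega_Cut 1], Omega_Cut 2,
    Omega_Cut 2], Branch [Branch [Branch [Branch [Branch [Omega_Cut 2, Omega_Cut 2], Omega_Cut 2,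
    Omega_Cut 1], Omega_Cut 2, Omega_Cut 1], Omega_Cut 2, Omega_Cut 2], Branch [Branch [Omega_Cut 2,
    Branch [Branch [Omega_Cut 1, Omega_Cut 1], Omega_Cut 1], Omega_Cut 1], Branch [Branch [Branch
    [Branch [Branch [Omega_Cut 1, Omega_Cut 1], Omega_Cut 1], Omega_Cut 1], Omega_Cut 1],
    Omega_Cut 1], Omega_Cut 1], Omega_Cut 2, Omega_Cut 2, Omega_Cut 1], Branch [Branch [Branch
    [Omega_Cut 2, Omega_Cut 2, Omega_Cut 1], Omega_Cut 2, Omega_Cut 1], Branch [Omega_Cut 2, Branch
    [Omega_Cut 1, Omega_Cut 1], Omega_Cut 1], Omega_Cut 2, Omega_Cut 1], Branch [Branch
    [Omega_Cut 2, Omega_Cut 2, Omega_Cut 1], Omega_Cut 2, Omega_Cut 2], Branch [Omega_Cut 2,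
    Omega_Cut 2, Omega_Cut 1], Omega_Cut 2, Omega_Cut 2, Omega_Cut 2]"

lemma theta3_cert_571_ok: "cert_ok 2 1 571 theta3_cert_571 small_primes 50000 463 1"
  by (simp add: theta3_cert_571_def small_primes_def)

definition theta1_cert_8800 :: certificate where
  "theta1_cert_8800 = Branch [Branch [Branch [Omega_Cut 4, Branch [Omega_Cut 3, Omega_Cut 3,
    Omega_Cut 2], Omega_Cut 3, Omega_Cut 2], Branch [Omega_Cut 4, Branch [Omega_Cut 3, Omega_Cut 2,
    Omega_Cut 1], Omega_Cut 3], Omega_Cut 4, Omega_Cut 3, Omega_Cut 3], Branch [Branch [Omega_Cut 4,
    Branch [Omega_Cut 3, Branch [Omega_Cut 2, Branch [Omega_Cut 1]], Omega_Cut 2], Omega_Cut 3,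
    Omega_Cut 2], Branch [Branch [Omega_Cut 3, Branch [Branch [Omega_Cut 2, Omega_Cut 1], Branch
    [Branch [Branch [Omega_Cut 1], Omega_Cut 1], Omega_Cut 1]], Omega_Cut 2], Branch [Branch [Branch
    [Omega_Cut 2, Omega_Cut 2], Omega_Cut 2], Omega_Cut 2, Omega_Cut 1], Omega_Cut 2], Branch
    [Omega_Cut 3, Branch [Omega_Cut 2, Omega_Cut 2], Omega_Cut 2], Omega_Cut 3, Omega_Cut 3], Branch
    [Omega_Cut 4, Branch [Omega_Cut 3, Branch [Omega_Cut 2, Omega_Cut 2], Omega_Cut 2], Omega_Cut 3,
    Omega_Cut 3], Branch [Omega_Cut 4, Branch [Omega_Cut 3, Omega_Cut 2, Omega_Cut 2], Omega_Cut 3,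
    Omega_Cut 2], Omega_Cut 4, Omega_Cut 4, Omega_Cut 3]"

lemma theta1_cert_8800_ok: "cert_ok 4 2 8800 theta1_cert_8800 small_primes 1000000 17689 1"
  by (simp add: theta1_cert_8800_def small_primes_def)

definition theta2_cert_8800 :: certificate where
  "theta2_cert_8800 = Branch [Omega_Cut 5, Branch [Omega_Cut 4, Branch [Branch [Omega_Cut 3, Branch
    [Omega_Cut 2, Branch [Branch [Branch [Omega_Cut 1, Omega_Cut 1], Omega_Cut 1], Omega_Cut 1]],
    Omega_Cut 2], Branch [Branch [Branch [Omega_Cut 2, Branch [Branch [Omega_Cut 1, Omega_Cut 1],
    Omega_Cut 1]], Branch [Branch [Branch [Branch [Omega_Cut 1, Omega_Cut 1], Omega_Cut 1],
    Omega_Cut 1], Omega_Cut 1]], Branch [Branch [Branch [Branch [Branch [Branch [Branch [Branch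
    [Omega_Cut 1, Omega_Cut 1], Omega_Cut 1], Omega_Cut 1], Omega_Cut 1], Omega_Cut 1],
    Omega_Cut 1], Omega_Cut 1], Omega_Cut 1], Omega_Cut 1], Omega_Cut 2], Branch [Omega_Cut 3,
    Branch [Omega_Cut 2, Branch [Omega_Cut 1, Omega_Cut 1]], Omega_Cut 2], Omega_Cut 3,
    Omega_Cut 3], Branch [Omega_Cut 4, Branch [Omega_Cut 3, Branch [Omega_Cut 2, Branch [Branch
    [Branch [Branch [Omega_Cut 1, Omega_Cut 1], Omega_Cut 1], Omega_Cut 1], Omega_Cut 1]],
    Omega_Cut 2], Omega_Cut 3, Omega_Cut 3], Omega_Cut 4, Omega_Cut 4, Omega_Cut 4]"

lemma theta2_cert_8800_ok: "cert_ok 4 1 8800 theta2_cert_8800 small_primes 1250 53 1"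
  by (simp add: theta2_cert_8800_def small_primes_def)

definition theta3_cert_8800 :: certificate where
  "theta3_cert_8800 = Branch [Branch [Branch [Omega_Cut 4, Branch [Omega_Cut 3, Omega_Cut 3,
    Omega_Cut 2, Omega_Cut 1], Omega_Cut 3, Omega_Cut 2, Omega_Cut 2], Branch [Branch [Omega_Cut 3,
    Omega_Cut 3, Omega_Cut 2, Omega_Cut 1], Omega_Cut 3, Omega_Cut 3, Omega_Cut 2, Omega_Cut 1],
    Branch [Omega_Cut 3, Omega_Cut 3, Omega_Cut 2, Omega_Cut 1], Omega_Cut 3, Omega_Cut 3,
    Omega_Cut 2, Omega_Cut 2], Branch [Omega_Cut 4, Branch [Branch [Omega_Cut 3, Branch
    [Omega_Cut 2, Branch [Branch [Branch [Omega_Cut 1, Omega_Cut 1], Omega_Cut 1], Omega_Cut 1]],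
    Omega_Cut 2, Omega_Cut 1], Branch [Branch [Branch [Omega_Cut 2, Branch [Branch [Omega_Cut 1,
    Omega_Cut 1], Omega_Cut 1]], Branch [Branch [Branch [Branch [Omega_Cut 1, Omega_Cut 1],
    Omega_Cut 1], Omega_Cut 1], Omega_Cut 1], Omega_Cut 1], Omega_Cut 2, Omega_Cut 1], Omega_Cut 2,
    Omega_Cut 2], Branch [Omega_Cut 3, Branch [Omega_Cut 2, Omega_Cut 2], Omega_Cut 2, Omega_Cut 1],
    Omega_Cut 3, Omega_Cut 3, Omega_Cut 2, Omega_Cut 2], Branch [Omega_Cut 4, Branch [Omega_Cut 3,
    Branch [Omega_Cut 2, Omega_Cut 2, Omega_Cut 1], Omega_Cut 2, Omega_Cut 1], Omega_Cut 3,
    Omega_Cut 3, Omega_Cut 2, Omega_Cut 2], Omega_Cut 4, Omega_Cut 4, Omega_Cut 4, Omega_Cut 3,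
    Omega_Cut 3, Omega_Cut 3, Omega_Cut 2]"

lemma theta3_cert_8800_ok: "cert_ok 2 1 8800 theta3_cert_8800 small_primes 100000 133 1"
  by (simp add: theta3_cert_8800_def small_primes_def)

definition theta1_cert_150000 :: certificate where
  "theta1_cert_150000 = Branch [Branch [Branch [Omega_Cut 5, Branch [Omega_Cut 4, Omega_Cut 4,
    Omega_Cut 3, Omega_Cut 2], Omega_Cut 4, Omega_Cut 3, Omega_Cut 3], Branch [Branch [Omega_Cut 4,
    Omega_Cut 4, Omega_Cut 3, Omega_Cut 2], Branch [Omega_Cut 4, Branch [Omega_Cut 3, Omega_Cut 2,
    Omega_Cut 1], Omega_Cut 3, Omega_Cut 2], Omega_Cut 4, Omega_Cut 3], Branch [Omega_Cut 4,
    Omega_Cut 4, Omega_Cut 3, Omega_Cut 3], Omega_Cut 4, Omega_Cut 4, Omega_Cut 4], Branch [Branch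
    [Omega_Cut 5, Branch [Omega_Cut 4, Branch [Omega_Cut 3, Branch [Omega_Cut 2, Branch
    [Omega_Cut 1]], Omega_Cut 2], Omega_Cut 3, Omega_Cut 2], Omega_Cut 4, Omega_Cut 3, Omega_Cut 3],
    Branch [Branch [Omega_Cut 4, Branch [Branch [Omega_Cut 3, Omega_Cut 2, Omega_Cut 2], Branch
    [Branch [Omega_Cut 2, Branch [Omega_Cut 1]], Branch [Branch [Branch [Omega_Cut 1, Omega_Cut 1],
    Omega_Cut 1], Omega_Cut 1]], Omega_Cut 2], Omega_Cut 3, Omega_Cut 2], Branch [Branch [Branch
    [Omega_Cut 3, Branch [Omega_Cut 2, Omega_Cut 2], Omega_Cut 2], Branch [Branch [Branch
    [Omega_Cut 2, Omega_Cut 1], Omega_Cut 2], Omega_Cut 2], Omega_Cut 2], Omega_Cut 3, Omega_Cut 2],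
    Omega_Cut 3, Omega_Cut 3], Branch [Omega_Cut 4, Branch [Omega_Cut 3, Omega_Cut 3, Omega_Cut 2],
    Omega_Cut 3, Omega_Cut 2], Omega_Cut 4, Omega_Cut 4, Omega_Cut 3], Branch [Omega_Cut 5, Branch
    [Omega_Cut 4, Branch [Branch [Omega_Cut 3, Omega_Cut 2, Omega_Cut 2], Omega_Cut 3, Omega_Cut 2],
    Omega_Cut 3, Omega_Cut 3], Omega_Cut 4, Omega_Cut 4, Omega_Cut 3, Omega_Cut 3], Branch
    [Omega_Cut 5, Branch [Omega_Cut 4, Branch [Omega_Cut 3, Omega_Cut 3, Omega_Cut 2], Omega_Cut 3,
    Omega_Cut 2], Omega_Cut 4, Omega_Cut 4, Omega_Cut 3], Omega_Cut 5, Omega_Cut 5, Omega_Cut 5,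
    Omega_Cut 4, Omega_Cut 4]"

lemma theta1_cert_150000_ok: "cert_ok 4 2 150000 theta1_cert_150000 small_primes 100000000 368449 1"
  by (simp add: theta1_cert_150000_def small_primes_def)

definition theta2_cert_150000 :: certificate where
  "theta2_cert_150000 = Branch [Omega_Cut 6, Branch [Omega_Cut 5, Branch [Branch [Omega_Cut 4,
    Branch [Omega_Cut 3, Branch [Branch [Omega_Cut 2, Branch [Omega_Cut 1, Omega_Cut 1]], Branch
    [Branch [Branch [Omega_Cut 1, Omega_Cut 1], Omega_Cut 1], Omega_Cut 1]], Omega_Cut 2],
    Omega_Cut 3, Omega_Cut 2], Branch [Branch [Branch [Omega_Cut 3, Branch [Omega_Cut 2, Branch
    [Omega_Cut 1, Omega_Cut 1]], Omega_Cut 2], Branch [Branch [Branch [Omega_Cut 2, Branch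
    [Omega_Cut 1, Omega_Cut 1]], Branch [Branch [Omega_Cut 1, Omega_Cut 1], Omega_Cut 1]], Branch
    [Branch [Branch [Branch [Branch [Omega_Cut 1, Omega_Cut 1], Omega_Cut 1], Omega_Cut 1],
    Omega_Cut 1], Omega_Cut 1]], Omega_Cut 2], Branch [Branch [Branch [Branch [Branch [Omega_Cut 2,
    Branch [Omega_Cut 1, Omega_Cut 1]], Branch [Branch [Branch [Omega_Cut 1, Omega_Cut 1],
    Omega_Cut 1], Omega_Cut 1]], Omega_Cut 2], Omega_Cut 2, Omega_Cut 1], Omega_Cut 2, Omega_Cut 1],
    Omega_Cut 2], Omega_Cut 3, Omega_Cut 3], Branch [Omega_Cut 4, Branch [Omega_Cut 3, Branch
    [Omega_Cut 2, Omega_Cut 2], Omega_Cut 2], Omega_Cut 3, Omega_Cut 2], Omega_Cut 4, Omega_Cut 4,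
    Omega_Cut 3], Branch [Omega_Cut 5, Branch [Omega_Cut 4, Branch [Omega_Cut 3, Branch [Branch
    [Branch [Omega_Cut 2, Omega_Cut 2], Omega_Cut 2], Omega_Cut 2], Omega_Cut 2], Omega_Cut 3,
    Omega_Cut 3], Omega_Cut 4, Omega_Cut 4, Omega_Cut 3], Branch [Omega_Cut 5, Branch [Omega_Cut 4,
    Branch [Omega_Cut 3, Branch [Omega_Cut 2, Omega_Cut 2], Omega_Cut 2], Omega_Cut 3], Omega_Cut 4,
    Omega_Cut 4, Omega_Cut 3], Omega_Cut 5, Omega_Cut 5, Omega_Cut 5, Omega_Cut 4, Omega_Cut 4]"

lemma theta2_cert_150000_ok: "cert_ok 4 1 150000 theta2_cert_150000 small_primes 100000 941 1"
  by (simp add: theta2_cert_150000_def small_primes_def)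

definition theta3_cert_150000 :: certificate where
  "theta3_cert_150000 = Branch [Branch [Branch [Omega_Cut 5, Branch [Omega_Cut 4, Branch
    [Omega_Cut 3, Omega_Cut 3, Omega_Cut 2], Omega_Cut 3, Omega_Cut 2, Omega_Cut 2], Omega_Cut 4,
    Omega_Cut 3, Omega_Cut 3, Omega_Cut 2], Branch [Branch [Omega_Cut 4, Omega_Cut 4, Omega_Cut 3,
    Omega_Cut 2, Omega_Cut 2], Omega_Cut 4, Omega_Cut 4, Omega_Cut 3, Omega_Cut 2, Omega_Cut 2],
    Branch [Omega_Cut 4, Omega_Cut 4, Omega_Cut 3, Omega_Cut 3, Omega_Cut 2], Omega_Cut 4,
    Omega_Cut 4, Omega_Cut 4, Omega_Cut 3, Omega_Cut 3, Omega_Cut 2], Branch [Omega_Cut 5, Branch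
    [Branch [Omega_Cut 4, Branch [Omega_Cut 3, Branch [Branch [Omega_Cut 2, Branch [Omega_Cut 1,
    Omega_Cut 1]], Branch [Branch [Branch [Omega_Cut 1, Omega_Cut 1], Omega_Cut 1], Omega_Cut 1],
    Omega_Cut 1], Omega_Cut 2], Omega_Cut 3, Omega_Cut 2, Omega_Cut 1], Branch [Branch [Branch
    [Omega_Cut 3, Branch [Omega_Cut 2, Branch [Omega_Cut 1, Omega_Cut 1]], Omega_Cut 2], Branch
    [Branch [Branch [Omega_Cut 2, Branch [Omega_Cut 1, Omega_Cut 1]], Branch [Branch [Omega_Cut 1,
    Omega_Cut 1], Omega_Cut 1]], Branch [Branch [Branch [Branch [Branch [Omega_Cut 1, Omega_Cut 1],
    Omega_Cut 1], Omega_Cut 1], Omega_Cut 1], Omega_Cut 1], Omega_Cut 1], Omega_Cut 2, Omega_Cut 1],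
    Branch [Branch [Branch [Branch [Branch [Omega_Cut 2, Branch [Omega_Cut 1, Omega_Cut 1]], Branch
    [Branch [Branch [Omega_Cut 1, Omega_Cut 1], Omega_Cut 1], Omega_Cut 1]], Omega_Cut 2,
    Omega_Cut 1], Omega_Cut 2, Omega_Cut 1], Omega_Cut 2, Omega_Cut 1], Omega_Cut 2, Omega_Cut 2],
    Omega_Cut 3, Omega_Cut 3, Omega_Cut 2, Omega_Cut 1], Branch [Omega_Cut 4, Branch [Omega_Cut 3,
    Branch [Omega_Cut 2, Omega_Cut 2], Omega_Cut 2, Omega_Cut 1], Omega_Cut 3, Omega_Cut 2,
    Omega_Cut 2], Omega_Cut 4, Omega_Cut 4, Omega_Cut 3, Omega_Cut 3, Omega_Cut 2, Omega_Cut 2],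
    Branch [Omega_Cut 5, Branch [Omega_Cut 4, Branch [Omega_Cut 3, Branch [Branch [Branch
    [Omega_Cut 2, Omega_Cut 2], Omega_Cut 2, Omega_Cut 1], Omega_Cut 2, Omega_Cut 1], Omega_Cut 2,
    Omega_Cut 1], Omega_Cut 3, Omega_Cut 3, Omega_Cut 2], Omega_Cut 4, Omega_Cut 4, Omega_Cut 3,
    Omega_Cut 3, Omega_Cut 3, Omega_Cut 2], Branch [Omega_Cut 5, Branch [Omega_Cut 4, Branch
    [Omega_Cut 3, Branch [Omega_Cut 2, Omega_Cut 2], Omega_Cut 2], Omega_Cut 3, Omega_Cut 2,
    Omega_Cut 2], Omega_Cut 4, Omega_Cut 4, Omega_Cut 3, Omega_Cut 3, Omega_Cut 2], Omega_Cut 5,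
    Omega_Cut 5, Omega_Cut 5, Omega_Cut 4, Omega_Cut 4, Omega_Cut 4, Omega_Cut 3, Omega_Cut 3,
    Omega_Cut 3, Omega_Cut 2]"

lemma theta3_cert_150000_ok: "cert_ok 2 1 150000 theta3_cert_150000 small_primes 1000000 147 1"
  by (simp add: theta3_cert_150000_def small_primes_def)

definition theta1_cert_2700000 :: certificate where
  "theta1_cert_2700000 = Branch [Branch [Branch [Omega_Cut 6, Branch [Omega_Cut 5, Branch
    [Omega_Cut 4, Omega_Cut 4, Omega_Cut 3], Omega_Cut 4, Omega_Cut 3, Omega_Cut 3], Omega_Cut 5,
    Omega_Cut 4, Omega_Cut 4, Omega_Cut 3], Branch [Branch [Omega_Cut 5, Omega_Cut 5, Omega_Cut 4,
    Omega_Cut 3, Omega_Cut 3], Branch [Omega_Cut 5, Branch [Omega_Cut 4, Branch [Omega_Cut 3,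
    Omega_Cut 2, Omega_Cut 1], Omega_Cut 2], Omega_Cut 4, Omega_Cut 3], Omega_Cut 5, Omega_Cut 4,
    Omega_Cut 4], Branch [Omega_Cut 5, Omega_Cut 5, Omega_Cut 4, Omega_Cut 4, Omega_Cut 3],
    Omega_Cut 5, Omega_Cut 5, Omega_Cut 5, Omega_Cut 4, Omega_Cut 4], Branch [Branch [Omega_Cut 6,
    Branch [Omega_Cut 5, Branch [Omega_Cut 4, Branch [Omega_Cut 3, Branch [Omega_Cut 2, Branch
    [Omega_Cut 1]], Omega_Cut 2], Omega_Cut 3], Omega_Cut 4, Omega_Cut 3], Omega_Cut 5, Omega_Cut 4,
    Omega_Cut 4, Omega_Cut 3], Branch [Branch [Omega_Cut 5, Branch [Omega_Cut 4, Branch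
    [Omega_Cut 3, Branch [Branch [Omega_Cut 2, Branch [Omega_Cut 1, Omega_Cut 1]], Branch [Branch
    [Omega_Cut 1, Omega_Cut 1], Omega_Cut 1]], Omega_Cut 2], Omega_Cut 3, Omega_Cut 2], Omega_Cut 4,
    Omega_Cut 3, Omega_Cut 3], Branch [Branch [Branch [Omega_Cut 4, Branch [Omega_Cut 3,
    Omega_Cut 2, Omega_Cut 2], Omega_Cut 3], Branch [Branch [Omega_Cut 3, Branch [Omega_Cut 2,
    Branch [Omega_Cut 1, Omega_Cut 1]], Omega_Cut 2], Branch [Branch [Omega_Cut 2, Omega_Cut 2],
    Omega_Cut 2], Omega_Cut 2], Omega_Cut 3, Omega_Cut 2], Branch [Branch [Branch [Branch
    [Omega_Cut 3, Omega_Cut 2, Omega_Cut 2], Branch [Branch [Omega_Cut 2, Omega_Cut 2],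
    Omega_Cut 2], Omega_Cut 2], Omega_Cut 3, Omega_Cut 2], Omega_Cut 3, Omega_Cut 2], Omega_Cut 3,
    Omega_Cut 3], Branch [Omega_Cut 4, Omega_Cut 3, Omega_Cut 3], Omega_Cut 4, Omega_Cut 3], Branch
    [Omega_Cut 5, Branch [Omega_Cut 4, Branch [Omega_Cut 3, Omega_Cut 3, Omega_Cut 2], Omega_Cut 3,
    Omega_Cut 2], Omega_Cut 4, Omega_Cut 3, Omega_Cut 3], Omega_Cut 5, Omega_Cut 5, Omega_Cut 4,
    Omega_Cut 4, Omega_Cut 4], Branch [Omega_Cut 6, Branch [Branch [Omega_Cut 5, Omega_Cut 4,
    Omega_Cut 4, Omega_Cut 3], Branch [Branch [Omega_Cut 4, Branch [Omega_Cut 3, Omega_Cut 2,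
    Omega_Cut 2], Omega_Cut 3], Branch [Branch [Omega_Cut 3, Omega_Cut 3, Omega_Cut 2], Omega_Cut 3,
    Omega_Cut 2], Omega_Cut 3, Omega_Cut 2], Omega_Cut 4, Omega_Cut 4, Omega_Cut 3], Branch
    [Omega_Cut 5, Omega_Cut 4, Omega_Cut 4, Omega_Cut 3], Omega_Cut 5, Omega_Cut 5, Omega_Cut 4,
    Omega_Cut 4], Branch [Omega_Cut 6, Branch [Omega_Cut 5, Branch [Omega_Cut 4, Branch
    [Omega_Cut 3, Omega_Cut 3, Omega_Cut 2], Omega_Cut 3, Omega_Cut 2], Omega_Cut 4, Omega_Cut 3,
    Omega_Cut 3], Omega_Cut 5, Omega_Cut 5, Omega_Cut 4, Omega_Cut 4], Branch [Omega_Cut 6,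
    Omega_Cut 5, Omega_Cut 5, Omega_Cut 4, Omega_Cut 4, Omega_Cut 4], Omega_Cut 6, Omega_Cut 6,
    Omega_Cut 5, Omega_Cut 5, Omega_Cut 5, Omega_Cut 5, Omega_Cut 4]"

lemma theta1_cert_2700000_ok: "cert_ok 4 2 2700000 theta1_cert_2700000 small_primes 4000000 2809 1"
  by (simp add: theta1_cert_2700000_def small_primes_def)

definition theta2_cert_2700000 :: certificate where
  "theta2_cert_2700000 = Branch [Omega_Cut 7, Branch [Omega_Cut 6, Branch [Branch [Omega_Cut 5,
    Branch [Omega_Cut 4, Branch [Omega_Cut 3, Branch [Branch [Omega_Cut 2, Branch [Omega_Cut 1,
    Omega_Cut 1]], Branch [Branch [Omega_Cut 1, Omega_Cut 1], Omega_Cut 1]], Omega_Cut 2],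
    Omega_Cut 3], Omega_Cut 4, Omega_Cut 3, Omega_Cut 3], Branch [Branch [Omega_Cut 4, Branch
    [Branch [Omega_Cut 3, Branch [Omega_Cut 2, Branch [Omega_Cut 1, Omega_Cut 1]], Omega_Cut 2],
    Branch [Branch [Omega_Cut 2, Branch [Branch [Branch [Omega_Cut 1, Omega_Cut 1], Omega_Cut 1],
    Omega_Cut 1]], Branch [Branch [Branch [Branch [Branch [Omega_Cut 1, Omega_Cut 1], Omega_Cut 1],
    Omega_Cut 1], Omega_Cut 1], Omega_Cut 1]], Omega_Cut 2], Omega_Cut 3, Omega_Cut 2], Branch
    [Branch [Branch [Branch [Omega_Cut 3, Branch [Omega_Cut 2, Branch [Omega_Cut 1, Omega_Cut 1]],
    Omega_Cut 2], Branch [Branch [Omega_Cut 2, Branch [Branch [Omega_Cut 1, Omega_Cut 1],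
    Omega_Cut 1]], Branch [Branch [Branch [Branch [Omega_Cut 1, Omega_Cut 1], Omega_Cut 1],
    Omega_Cut 1], Omega_Cut 1]], Omega_Cut 2], Branch [Branch [Branch [Branch [Omega_Cut 2, Branch
    [Omega_Cut 1, Omega_Cut 1]], Branch [Branch [Branch [Branch [Branch [Omega_Cut 1, Omega_Cut 1],
    Omega_Cut 1], Omega_Cut 1], Omega_Cut 1], Omega_Cut 1]], Branch [Branch [Branch [Branch [Branch
    [Branch [Branch [Omega_Cut 1, Omega_Cut 1], Omega_Cut 1], Omega_Cut 1], Omega_Cut 1],
    Omega_Cut 1], Omega_Cut 1], Omega_Cut 1]], Branch [Branch [Branch [Branch [Branch [Branch
    [Branch [Branch [Branch [Omega_Cut 1, Omega_Cut 1], Omega_Cut 1], Omega_Cut 1], Omega_Cut 1],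
    Omega_Cut 1], Omega_Cut 1], Omega_Cut 1], Omega_Cut 1], Omega_Cut 1]], Omega_Cut 2], Branch
    [Branch [Branch [Branch [Branch [Branch [Omega_Cut 2, Branch [Omega_Cut 1, Omega_Cut 1]], Branch
    [Branch [Omega_Cut 1, Omega_Cut 1], Omega_Cut 1]], Branch [Branch [Branch [Branch [Branch
    [Branch [Omega_Cut 1, Omega_Cut 1], Omega_Cut 1], Omega_Cut 1], Omega_Cut 1], Omega_Cut 1],
    Omega_Cut 1]], Branch [Branch [Branch [Branch [Branch [Branch [Branch [Branch [Branch [Branch
    [Omega_Cut 1, Omega_Cut 1], Omega_Cut 1], Omega_Cut 1], Omega_Cut 1], Omega_Cut 1],
    Omega_Cut 1], Omega_Cut 1], Omega_Cut 1], Omega_Cut 1], Omega_Cut 1]], Branch [Branch [Branch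
    [Branch [Branch [Branch [Branch [Branch [Branch [Branch [Branch [Branch [Omega_Cut 1,
    Omega_Cut 1], Omega_Cut 1], Omega_Cut 1], Omega_Cut 1], Omega_Cut 1], Omega_Cut 1],
    Omega_Cut 1], Omega_Cut 1], Omega_Cut 1], Omega_Cut 1], Omega_Cut 1], Omega_Cut 1],
    Omega_Cut 1], Omega_Cut 2, Omega_Cut 1], Omega_Cut 2], Omega_Cut 3, Omega_Cut 3], Omega_Cut 4,
    Omega_Cut 4, Omega_Cut 3], Branch [Omega_Cut 5, Branch [Omega_Cut 4, Branch [Omega_Cut 3, Branch
    [Branch [Omega_Cut 2, Branch [Omega_Cut 1, Omega_Cut 1]], Omega_Cut 2], Omega_Cut 2],
    Omega_Cut 3, Omega_Cut 2], Omega_Cut 4, Omega_Cut 3, Omega_Cut 3], Omega_Cut 5, Omega_Cut 5,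
    Omega_Cut 4, Omega_Cut 4], Branch [Omega_Cut 6, Branch [Omega_Cut 5, Branch [Omega_Cut 4, Branch
    [Branch [Omega_Cut 3, Branch [Branch [Omega_Cut 2, Branch [Omega_Cut 1, Omega_Cut 1]], Branch
    [Branch [Omega_Cut 1, Omega_Cut 1], Omega_Cut 1]], Omega_Cut 2], Branch [Branch [Branch
    [Omega_Cut 2, Branch [Branch [Omega_Cut 1, Omega_Cut 1], Omega_Cut 1]], Branch [Branch [Branch
    [Branch [Omega_Cut 1, Omega_Cut 1], Omega_Cut 1], Omega_Cut 1], Omega_Cut 1]], Omega_Cut 2],
    Omega_Cut 2], Omega_Cut 3, Omega_Cut 2], Omega_Cut 4, Omega_Cut 4, Omega_Cut 3], Omega_Cut 5,
    Omega_Cut 5, Omega_Cut 5, Omega_Cut 4, Omega_Cut 4], Branch [Omega_Cut 6, Branch [Omega_Cut 5,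
    Branch [Omega_Cut 4, Branch [Omega_Cut 3, Branch [Omega_Cut 2, Omega_Cut 2], Omega_Cut 2],
    Omega_Cut 3, Omega_Cut 2], Omega_Cut 4, Omega_Cut 3], Omega_Cut 5, Omega_Cut 5, Omega_Cut 4,
    Omega_Cut 4], Omega_Cut 6, Omega_Cut 6, Omega_Cut 6, Omega_Cut 5, Omega_Cut 5, Omega_Cut 5,
    Omega_Cut 5]"

lemma theta2_cert_2700000_ok: "cert_ok 4 1 2700000 theta2_cert_2700000 small_primes 100000 189 1"
  by (simp add: theta2_cert_2700000_def small_primes_def)

definition theta3_cert_2700000 :: certificate where
  "theta3_cert_2700000 = Branch [Branch [Branch [Omega_Cut 6, Branch [Omega_Cut 5, Branch
    [Omega_Cut 4, Branch [Omega_Cut 3, Omega_Cut 3, Omega_Cut 2], Omega_Cut 3, Omega_Cut 2],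
    Omega_Cut 4, Omega_Cut 3, Omega_Cut 3, Omega_Cut 2], Omega_Cut 5, Omega_Cut 4, Omega_Cut 4,
    Omega_Cut 3, Omega_Cut 3, Omega_Cut 2], Branch [Branch [Omega_Cut 5, Branch [Branch
    [Omega_Cut 4, Omega_Cut 4, Omega_Cut 3, Omega_Cut 2], Omega_Cut 4, Omega_Cut 3, Omega_Cut 2,
    Omega_Cut 1], Omega_Cut 4, Omega_Cut 3, Omega_Cut 3, Omega_Cut 2], Omega_Cut 5, Omega_Cut 5,
    Omega_Cut 4, Omega_Cut 4, Omega_Cut 3, Omega_Cut 2], Branch [Omega_Cut 5, Omega_Cut 5,
    Omega_Cut 4, Omega_Cut 4, Omega_Cut 3, Omega_Cut 2, Omega_Cut 2], Omega_Cut 5, Omega_Cut 5,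
    Omega_Cut 5, Omega_Cut 4, Omega_Cut 4, Omega_Cut 3, Omega_Cut 3, Omega_Cut 2], Branch [Branch
    [Branch [Omega_Cut 5, Omega_Cut 5, Omega_Cut 4, Omega_Cut 4, Omega_Cut 3, Omega_Cut 2],
    Omega_Cut 5, Omega_Cut 5, Omega_Cut 4, Omega_Cut 4, Omega_Cut 3, Omega_Cut 2], Branch [Branch
    [Omega_Cut 5, Branch [Omega_Cut 4, Branch [Omega_Cut 3, Branch [Branch [Omega_Cut 2, Branch
    [Omega_Cut 1, Omega_Cut 1]], Branch [Branch [Omega_Cut 1, Omega_Cut 1], Omega_Cut 1]],
    Omega_Cut 2], Omega_Cut 3, Omega_Cut 2], Omega_Cut 4, Omega_Cut 3, Omega_Cut 3, Omega_Cut 2],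
    Branch [Branch [Omega_Cut 4, Branch [Branch [Omega_Cut 3, Branch [Omega_Cut 2, Branch
    [Omega_Cut 1, Omega_Cut 1]], Omega_Cut 2], Branch [Branch [Omega_Cut 2, Branch [Branch [Branch
    [Omega_Cut 1, Omega_Cut 1], Omega_Cut 1], Omega_Cut 1]], Branch [Branch [Branch [Branch [Branch
    [Omega_Cut 1, Omega_Cut 1], Omega_Cut 1], Omega_Cut 1], Omega_Cut 1], Omega_Cut 1],
    Omega_Cut 1], Omega_Cut 2, Omega_Cut 1], Omega_Cut 3, Omega_Cut 2], Branch [Branch [Branch
    [Branch [Omega_Cut 3, Branch [Omega_Cut 2, Branch [Omega_Cut 1, Omega_Cut 1]], Omega_Cut 2],
    Branch [Branch [Omega_Cut 2, Branch [Branch [Omega_Cut 1, Omega_Cut 1], Omega_Cut 1]], Branch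
    [Branch [Branch [Branch [Omega_Cut 1, Omega_Cut 1], Omega_Cut 1], Omega_Cut 1], Omega_Cut 1],
    Omega_Cut 1], Omega_Cut 2], Branch [Branch [Branch [Branch [Omega_Cut 2, Branch [Omega_Cut 1,
    Omega_Cut 1]], Branch [Branch [Branch [Branch [Branch [Omega_Cut 1, Omega_Cut 1], Omega_Cut 1],
    Omega_Cut 1], Omega_Cut 1], Omega_Cut 1]], Branch [Branch [Branch [Branch [Branch [Branch
    [Branch [Omega_Cut 1, Omega_Cut 1], Omega_Cut 1], Omega_Cut 1], Omega_Cut 1], Omega_Cut 1],
    Omega_Cut 1], Omega_Cut 1], Omega_Cut 1], Branch [Branch [Branch [Branch [Branch [Branch [Branch
    [Branch [Branch [Omega_Cut 1, Omega_Cut 1], Omega_Cut 1], Omega_Cut 1], Omega_Cut 1],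
    Omega_Cut 1], Omega_Cut 1], Omega_Cut 1], Omega_Cut 1], Omega_Cut 1], Omega_Cut 1], Omega_Cut 2,
    Omega_Cut 1], Branch [Branch [Branch [Branch [Branch [Branch [Omega_Cut 2, Branch [Omega_Cut 1,
    Omega_Cut 1]], Branch [Branch [Omega_Cut 1, Omega_Cut 1], Omega_Cut 1]], Branch [Branch [Branch
    [Branch [Branch [Branch [Omega_Cut 1, Omega_Cut 1], Omega_Cut 1], Omega_Cut 1], Omega_Cut 1],
    Omega_Cut 1], Omega_Cut 1], Omega_Cut 1], Branch [Branch [Branch [Branch [Branch [Branch [Branch
    [Branch [Branch [Omega_Cut 1, Omega_Cut 1], Omega_Cut 1], Omega_Cut 1], Omega_Cut 1],
    Omega_Cut 1], Omega_Cut 1], Omega_Cut 1], Omega_Cut 1], Omega_Cut 1], Omega_Cut 1], Omega_Cut 2,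
    Omega_Cut 1], Omega_Cut 2, Omega_Cut 1], Omega_Cut 2, Omega_Cut 1], Omega_Cut 3, Omega_Cut 3,
    Omega_Cut 2], Omega_Cut 4, Omega_Cut 4, Omega_Cut 3, Omega_Cut 3, Omega_Cut 2], Branch
    [Omega_Cut 5, Branch [Omega_Cut 4, Branch [Omega_Cut 3, Branch [Branch [Omega_Cut 2,
    Omega_Cut 2], Omega_Cut 2, Omega_Cut 1], Omega_Cut 2], Omega_Cut 3, Omega_Cut 2, Omega_Cut 2],
    Omega_Cut 4, Omega_Cut 3, Omega_Cut 3, Omega_Cut 2], Omega_Cut 5, Omega_Cut 5, Omega_Cut 4,
    Omega_Cut 4, Omega_Cut 4, Omega_Cut 3, Omega_Cut 3, Omega_Cut 2], Branch [Branch [Branch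
    [Omega_Cut 5, Omega_Cut 5, Omega_Cut 4, Omega_Cut 3, Omega_Cut 3, Omega_Cut 2], Omega_Cut 5,
    Omega_Cut 5, Omega_Cut 4, Omega_Cut 3, Omega_Cut 3, Omega_Cut 2], Branch [Omega_Cut 5, Branch
    [Omega_Cut 4, Branch [Branch [Omega_Cut 3, Branch [Branch [Omega_Cut 2, Branch [Omega_Cut 1,
    Omega_Cut 1]], Branch [Branch [Omega_Cut 1, Omega_Cut 1], Omega_Cut 1]], Omega_Cut 2], Branch
    [Branch [Branch [Omega_Cut 2, Branch [Branch [Omega_Cut 1, Omega_Cut 1], Omega_Cut 1]],
    Omega_Cut 2, Omega_Cut 1], Omega_Cut 2, Omega_Cut 1], Omega_Cut 2, Omega_Cut 1], Omega_Cut 3,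
    Omega_Cut 2, Omega_Cut 2], Omega_Cut 4, Omega_Cut 4, Omega_Cut 3, Omega_Cut 2, Omega_Cut 2],
    Omega_Cut 5, Omega_Cut 5, Omega_Cut 5, Omega_Cut 4, Omega_Cut 4, Omega_Cut 3, Omega_Cut 3,
    Omega_Cut 2], Branch [Branch [Omega_Cut 5, Omega_Cut 5, Omega_Cut 4, Omega_Cut 4, Omega_Cut 3,
    Omega_Cut 3, Omega_Cut 2], Branch [Omega_Cut 5, Branch [Omega_Cut 4, Branch [Omega_Cut 3, Branch
    [Omega_Cut 2, Omega_Cut 2], Omega_Cut 2], Omega_Cut 3, Omega_Cut 2, Omega_Cut 1], Omega_Cut 4,
    Omega_Cut 3, Omega_Cut 3, Omega_Cut 2], Omega_Cut 5, Omega_Cut 5, Omega_Cut 4, Omega_Cut 4,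
    Omega_Cut 3, Omega_Cut 3, Omega_Cut 3], Branch [Branch [Omega_Cut 5, Omega_Cut 5, Omega_Cut 4,
    Omega_Cut 4, Omega_Cut 3, Omega_Cut 2], Omega_Cut 5, Omega_Cut 5, Omega_Cut 4, Omega_Cut 4,
    Omega_Cut 4, Omega_Cut 3, Omega_Cut 3, Omega_Cut 2], Branch [Omega_Cut 5, Omega_Cut 5,
    Omega_Cut 5, Omega_Cut 4, Omega_Cut 4, Omega_Cut 3, Omega_Cut 3, Omega_Cut 2], Branch
    [Omega_Cut 5, Omega_Cut 5, Omega_Cut 4, Omega_Cut 4, Omega_Cut 3, Omega_Cut 3, Omega_Cut 3],
    Omega_Cut 5, Omega_Cut 5, Omega_Cut 5, Omega_Cut 5, Omega_Cut 4, Omega_Cut 4, Omega_Cut 4,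
    Omega_Cut 3, Omega_Cut 3, Omega_Cut 3]"

lemma theta3_cert_2700000_ok: "cert_ok 2 1 2700000 theta3_cert_2700000 small_primes 200000 3 1"
  by (simp add: theta3_cert_2700000_def small_primes_def)

definition theta1_cert_63000000 :: certificate where
  "theta1_cert_63000000 = Branch [Branch [Branch [Omega_Cut 7, Branch [Omega_Cut 6, Branch
    [Omega_Cut 5, Branch [Omega_Cut 4, Omega_Cut 4, Omega_Cut 3, Omega_Cut 2], Omega_Cut 4,
    Omega_Cut 3], Omega_Cut 5, Omega_Cut 4, Omega_Cut 4], Omega_Cut 6, Omega_Cut 6, Omega_Cut 5,
    Omega_Cut 4, Omega_Cut 4], Branch [Branch [Omega_Cut 6, Omega_Cut 6, Omega_Cut 5, Omega_Cut 5,
    Omega_Cut 4, Omega_Cut 3], Branch [Omega_Cut 6, Branch [Omega_Cut 5, Branch [Omega_Cut 4,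
    Omega_Cut 3, Omega_Cut 2], Omega_Cut 3, Omega_Cut 3], Omega_Cut 5, Omega_Cut 4, Omega_Cut 3],
    Omega_Cut 6, Omega_Cut 5, Omega_Cut 5, Omega_Cut 4, Omega_Cut 3], Branch [Omega_Cut 6,
    Omega_Cut 6, Omega_Cut 5, Omega_Cut 5, Omega_Cut 4, Omega_Cut 4], Branch [Omega_Cut 6,
    Omega_Cut 5, Omega_Cut 5, Omega_Cut 4, Omega_Cut 4], Omega_Cut 6, Omega_Cut 6, Omega_Cut 5,
    Omega_Cut 5, Omega_Cut 5, Omega_Cut 4], Branch [Branch [Branch [Omega_Cut 6, Omega_Cut 6,
    Omega_Cut 5, Omega_Cut 5, Omega_Cut 4, Omega_Cut 3], Branch [Omega_Cut 6, Branch [Omega_Cut 5,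
    Branch [Omega_Cut 4, Branch [Omega_Cut 3, Branch [Omega_Cut 2, Branch [Omega_Cut 1]],
    Omega_Cut 2], Omega_Cut 3], Omega_Cut 4, Omega_Cut 3], Omega_Cut 5, Omega_Cut 4, Omega_Cut 3],
    Omega_Cut 6, Omega_Cut 5, Omega_Cut 5, Omega_Cut 4, Omega_Cut 4], Branch [Branch [Omega_Cut 6,
    Branch [Omega_Cut 5, Branch [Omega_Cut 4, Branch [Omega_Cut 3, Branch [Omega_Cut 2, Branch
    [Branch [Branch [Omega_Cut 1, Omega_Cut 1], Omega_Cut 1], Omega_Cut 1]], Omega_Cut 2],
    Omega_Cut 3, Omega_Cut 2], Omega_Cut 4, Omega_Cut 3], Omega_Cut 5, Omega_Cut 4, Omega_Cut 4,
    Omega_Cut 3], Branch [Branch [Omega_Cut 5, Branch [Omega_Cut 4, Branch [Branch [Omega_Cut 3,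
    Branch [Omega_Cut 2, Omega_Cut 2], Omega_Cut 2], Branch [Branch [Omega_Cut 2, Omega_Cut 2],
    Omega_Cut 2], Omega_Cut 2], Omega_Cut 3, Omega_Cut 2], Omega_Cut 4, Omega_Cut 3], Branch [Branch
    [Branch [Omega_Cut 4, Branch [Omega_Cut 3, Omega_Cut 3, Omega_Cut 2], Omega_Cut 3, Omega_Cut 2],
    Branch [Branch [Branch [Omega_Cut 3, Omega_Cut 3, Omega_Cut 2], Omega_Cut 3, Omega_Cut 2],
    Omega_Cut 3, Omega_Cut 2], Omega_Cut 3, Omega_Cut 2], Branch [Branch [Branch [Branch
    [Omega_Cut 3, Omega_Cut 3, Omega_Cut 2], Omega_Cut 3, Omega_Cut 2], Omega_Cut 3, Omega_Cut 2],
    Omega_Cut 3, Omega_Cut 2], Omega_Cut 3, Omega_Cut 2], Omega_Cut 4, Omega_Cut 4, Omega_Cut 3],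
    Branch [Omega_Cut 5, Branch [Omega_Cut 4, Branch [Omega_Cut 3, Omega_Cut 3, Omega_Cut 2],
    Omega_Cut 3], Omega_Cut 4, Omega_Cut 3], Omega_Cut 5, Omega_Cut 4, Omega_Cut 4, Omega_Cut 3],
    Branch [Omega_Cut 6, Branch [Omega_Cut 5, Branch [Branch [Omega_Cut 4, Omega_Cut 3,
    Omega_Cut 3], Branch [Branch [Omega_Cut 3, Omega_Cut 3, Omega_Cut 2], Omega_Cut 3, Omega_Cut 2],
    Omega_Cut 3, Omega_Cut 2], Omega_Cut 4, Omega_Cut 3, Omega_Cut 3], Omega_Cut 5, Omega_Cut 5,
    Omega_Cut 4, Omega_Cut 3], Omega_Cut 6, Omega_Cut 6, Omega_Cut 5, Omega_Cut 5, Omega_Cut 5,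
    Omega_Cut 4], Branch [Branch [Branch [Omega_Cut 6, Omega_Cut 6, Omega_Cut 5, Omega_Cut 4,
    Omega_Cut 4], Omega_Cut 6, Omega_Cut 6, Omega_Cut 5, Omega_Cut 5, Omega_Cut 4], Branch [Branch
    [Omega_Cut 6, Omega_Cut 5, Omega_Cut 5, Omega_Cut 4, Omega_Cut 3], Branch [Branch [Omega_Cut 5,
    Branch [Omega_Cut 4, Omega_Cut 3, Omega_Cut 3], Omega_Cut 4, Omega_Cut 3], Branch [Branch
    [Omega_Cut 4, Branch [Omega_Cut 3, Omega_Cut 3, Omega_Cut 2], Omega_Cut 3, Omega_Cut 2], Branch
    [Branch [Omega_Cut 3, Omega_Cut 3, Omega_Cut 2], Omega_Cut 3, Omega_Cut 2], Omega_Cut 3,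
    Omega_Cut 2], Omega_Cut 4, Omega_Cut 4, Omega_Cut 3], Omega_Cut 5, Omega_Cut 5, Omega_Cut 4,
    Omega_Cut 4], Branch [Omega_Cut 6, Branch [Omega_Cut 5, Branch [Omega_Cut 4, Omega_Cut 3,
    Omega_Cut 3], Omega_Cut 4, Omega_Cut 3], Omega_Cut 5, Omega_Cut 4, Omega_Cut 4], Omega_Cut 6,
    Omega_Cut 6, Omega_Cut 5, Omega_Cut 5, Omega_Cut 4, Omega_Cut 4], Branch [Branch [Omega_Cut 6,
    Omega_Cut 6, Omega_Cut 5, Omega_Cut 5, Omega_Cut 4, Omega_Cut 4], Branch [Omega_Cut 6, Branch
    [Omega_Cut 5, Branch [Omega_Cut 4, Branch [Omega_Cut 3, Omega_Cut 3, Omega_Cut 2], Omega_Cut 3],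
    Omega_Cut 4, Omega_Cut 3, Omega_Cut 3], Omega_Cut 5, Omega_Cut 4, Omega_Cut 4, Omega_Cut 3],
    Omega_Cut 6, Omega_Cut 6, Omega_Cut 5, Omega_Cut 5, Omega_Cut 5, Omega_Cut 4], Branch [Branch
    [Omega_Cut 6, Omega_Cut 6, Omega_Cut 5, Omega_Cut 5, Omega_Cut 4], Branch [Omega_Cut 6,
    Omega_Cut 5, Omega_Cut 5, Omega_Cut 4, Omega_Cut 4], Omega_Cut 6, Omega_Cut 6, Omega_Cut 5,
    Omega_Cut 5, Omega_Cut 4, Omega_Cut 4], Branch [Omega_Cut 6, Omega_Cut 6, Omega_Cut 6,
    Omega_Cut 5, Omega_Cut 5, Omega_Cut 5, Omega_Cut 4], Branch [Omega_Cut 6, Omega_Cut 6,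
    Omega_Cut 5, Omega_Cut 5, Omega_Cut 5, Omega_Cut 4], Omega_Cut 6, Omega_Cut 6, Omega_Cut 6,
    Omega_Cut 6, Omega_Cut 5, Omega_Cut 5, Omega_Cut 5]"

lemma theta1_cert_63000000_ok: "cert_ok 4 2 63000000 theta1_cert_63000000 small_primes 25000000 2809 1"
  by (simp add: theta1_cert_63000000_def small_primes_def)

definition theta2_cert_63000000 :: certificate where
  "theta2_cert_63000000 = Branch [Omega_Cut 8, Branch [Omega_Cut 7, Branch [Branch [Omega_Cut 6,
    Branch [Omega_Cut 5, Branch [Omega_Cut 4, Branch [Omega_Cut 3, Branch [Omega_Cut 2, Branch
    [Branch [Branch [Omega_Cut 1, Omega_Cut 1], Omega_Cut 1], Omega_Cut 1]], Omega_Cut 2],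
    Omega_Cut 3, Omega_Cut 2], Omega_Cut 4, Omega_Cut 3], Omega_Cut 5, Omega_Cut 4, Omega_Cut 4],
    Branch [Branch [Omega_Cut 5, Branch [Omega_Cut 4, Branch [Branch [Omega_Cut 3, Branch
    [Omega_Cut 2, Branch [Branch [Omega_Cut 1, Omega_Cut 1], Omega_Cut 1]], Omega_Cut 2], Branch
    [Branch [Omega_Cut 2, Branch [Branch [Branch [Omega_Cut 1, Omega_Cut 1], Omega_Cut 1],
    Omega_Cut 1]], Branch [Branch [Branch [Branch [Branch [Branch [Omega_Cut 1, Omega_Cut 1],
    Omega_Cut 1], Omega_Cut 1], Omega_Cut 1], Omega_Cut 1], Omega_Cut 1]], Omega_Cut 2],
    Omega_Cut 3, Omega_Cut 2], Omega_Cut 4, Omega_Cut 3], Branch [Branch [Branch [Omega_Cut 4,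
    Branch [Omega_Cut 3, Branch [Branch [Omega_Cut 2, Branch [Omega_Cut 1, Omega_Cut 1]], Branch
    [Branch [Branch [Omega_Cut 1, Omega_Cut 1], Omega_Cut 1], Omega_Cut 1]], Omega_Cut 2],
    Omega_Cut 3, Omega_Cut 2], Branch [Branch [Branch [Omega_Cut 3, Branch [Omega_Cut 2, Branch
    [Omega_Cut 1, Omega_Cut 1]], Omega_Cut 2], Branch [Branch [Branch [Omega_Cut 2, Branch
    [Omega_Cut 1, Omega_Cut 1]], Branch [Branch [Branch [Omega_Cut 1, Omega_Cut 1], Omega_Cut 1],
    Omega_Cut 1]], Branch [Branch [Branch [Branch [Branch [Branch [Omega_Cut 1, Omega_Cut 1],
    Omega_Cut 1], Omega_Cut 1], Omega_Cut 1], Omega_Cut 1], Omega_Cut 1]], Omega_Cut 2], Branch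
    [Branch [Branch [Branch [Omega_Cut 2, Branch [Branch [Branch [Omega_Cut 1, Omega_Cut 1],
    Omega_Cut 1], Omega_Cut 1]], Branch [Branch [Branch [Branch [Omega_Cut 1, Omega_Cut 1],
    Omega_Cut 1], Omega_Cut 1], Omega_Cut 1]], Branch [Branch [Branch [Branch [Branch [Branch
    [Branch [Omega_Cut 1, Omega_Cut 1], Omega_Cut 1], Omega_Cut 1], Omega_Cut 1], Omega_Cut 1],
    Omega_Cut 1], Omega_Cut 1]], Branch [Branch [Branch [Branch [Branch [Branch [Branch [Branch
    [Branch [Branch [Branch [Omega_Cut 1, Omega_Cut 1], Omega_Cut 1], Omega_Cut 1], Omega_Cut 1],
    Omega_Cut 1], Omega_Cut 1], Omega_Cut 1], Omega_Cut 1], Omega_Cut 1], Omega_Cut 1],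
    Omega_Cut 1]], Omega_Cut 2], Omega_Cut 3, Omega_Cut 2], Branch [Branch [Branch [Branch
    [Omega_Cut 3, Branch [Branch [Omega_Cut 2, Branch [Omega_Cut 1, Omega_Cut 1]], Branch [Branch
    [Omega_Cut 1, Omega_Cut 1], Omega_Cut 1]], Omega_Cut 2], Branch [Branch [Branch [Omega_Cut 2,
    Branch [Branch [Branch [Omega_Cut 1, Omega_Cut 1], Omega_Cut 1], Omega_Cut 1]], Branch [Branch
    [Branch [Branch [Branch [Omega_Cut 1, Omega_Cut 1], Omega_Cut 1], Omega_Cut 1], Omega_Cut 1],
    Omega_Cut 1]], Branch [Branch [Branch [Branch [Branch [Branch [Branch [Branch [Branch
    [Omega_Cut 1, Omega_Cut 1], Omega_Cut 1], Omega_Cut 1], Omega_Cut 1], Omega_Cut 1],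
    Omega_Cut 1], Omega_Cut 1], Omega_Cut 1], Omega_Cut 1]], Omega_Cut 2], Branch [Branch [Branch
    [Branch [Branch [Omega_Cut 2, Branch [Branch [Omega_Cut 1, Omega_Cut 1], Omega_Cut 1]], Branch
    [Branch [Branch [Branch [Omega_Cut 1, Omega_Cut 1], Omega_Cut 1], Omega_Cut 1], Omega_Cut 1]],
    Branch [Branch [Branch [Branch [Branch [Branch [Omega_Cut 1, Omega_Cut 1], Omega_Cut 1],
    Omega_Cut 1], Omega_Cut 1], Omega_Cut 1], Omega_Cut 1]], Branch [Branch [Branch [Branch [Branch
    [Branch [Branch [Branch [Branch [Branch [Omega_Cut 1, Omega_Cut 1], Omega_Cut 1], Omega_Cut 1],
    Omega_Cut 1], Omega_Cut 1], Omega_Cut 1], Omega_Cut 1], Omega_Cut 1], Omega_Cut 1],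
    Omega_Cut 1]], Omega_Cut 2, Omega_Cut 1], Omega_Cut 2], Branch [Branch [Branch [Branch [Branch
    [Branch [Branch [Branch [Omega_Cut 2, Branch [Omega_Cut 1, Omega_Cut 1]], Branch [Branch
    [Omega_Cut 1, Omega_Cut 1], Omega_Cut 1]], Branch [Branch [Branch [Branch [Omega_Cut 1,
    Omega_Cut 1], Omega_Cut 1], Omega_Cut 1], Omega_Cut 1]], Omega_Cut 2], Omega_Cut 2],
    Omega_Cut 2], Omega_Cut 2, Omega_Cut 1], Omega_Cut 2, Omega_Cut 1], Omega_Cut 2], Omega_Cut 3,
    Omega_Cut 2], Omega_Cut 4, Omega_Cut 4, Omega_Cut 3], Branch [Omega_Cut 5, Branch [Omega_Cut 4,
    Branch [Omega_Cut 3, Branch [Omega_Cut 2, Omega_Cut 2], Omega_Cut 2], Omega_Cut 3], Omega_Cut 4,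
    Omega_Cut 3], Omega_Cut 5, Omega_Cut 4, Omega_Cut 4], Branch [Omega_Cut 6, Branch [Omega_Cut 5,
    Branch [Omega_Cut 4, Branch [Branch [Omega_Cut 3, Branch [Omega_Cut 2, Omega_Cut 2],
    Omega_Cut 2], Branch [Branch [Omega_Cut 2, Omega_Cut 2], Omega_Cut 2], Omega_Cut 2],
    Omega_Cut 3, Omega_Cut 2], Omega_Cut 4, Omega_Cut 3, Omega_Cut 3], Omega_Cut 5, Omega_Cut 5,
    Omega_Cut 4, Omega_Cut 3], Omega_Cut 6, Omega_Cut 6, Omega_Cut 5, Omega_Cut 5, Omega_Cut 5,
    Omega_Cut 4], Branch [Omega_Cut 7, Branch [Omega_Cut 6, Branch [Omega_Cut 5, Branch [Branch
    [Omega_Cut 4, Branch [Omega_Cut 3, Branch [Omega_Cut 2, Branch [Branch [Branch [Omega_Cut 1,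
    Omega_Cut 1], Omega_Cut 1], Omega_Cut 1]], Omega_Cut 2], Omega_Cut 3, Omega_Cut 2], Branch
    [Branch [Branch [Omega_Cut 3, Branch [Omega_Cut 2, Branch [Omega_Cut 1, Omega_Cut 1]],
    Omega_Cut 2], Branch [Branch [Omega_Cut 2, Branch [Branch [Omega_Cut 1, Omega_Cut 1],
    Omega_Cut 1]], Omega_Cut 2], Omega_Cut 2], Branch [Branch [Branch [Branch [Omega_Cut 2,
    Omega_Cut 2], Omega_Cut 2], Omega_Cut 2], Omega_Cut 2], Omega_Cut 2], Omega_Cut 3, Omega_Cut 2],
    Omega_Cut 4, Omega_Cut 4, Omega_Cut 3], Omega_Cut 5, Omega_Cut 5, Omega_Cut 4, Omega_Cut 4],
    Omega_Cut 6, Omega_Cut 6, Omega_Cut 6, Omega_Cut 5, Omega_Cut 5, Omega_Cut 4], Branch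
    [Omega_Cut 7, Branch [Omega_Cut 6, Branch [Omega_Cut 5, Branch [Omega_Cut 4, Branch
    [Omega_Cut 3, Branch [Branch [Omega_Cut 2, Omega_Cut 2], Omega_Cut 2], Omega_Cut 2],
    Omega_Cut 3], Omega_Cut 4, Omega_Cut 3, Omega_Cut 3], Omega_Cut 5, Omega_Cut 4, Omega_Cut 4,
    Omega_Cut 3], Omega_Cut 6, Omega_Cut 6, Omega_Cut 5, Omega_Cut 5, Omega_Cut 5, Omega_Cut 4],
    Omega_Cut 7, Omega_Cut 7, Omega_Cut 7, Omega_Cut 6, Omega_Cut 6, Omega_Cut 6, Omega_Cut 6,
    Omega_Cut 5, Omega_Cut 5, Omega_Cut 5]"

lemma theta2_cert_63000000_ok: "cert_ok 4 1 63000000 theta2_cert_63000000 small_primes 500000 157 1"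
  by (simp add: theta2_cert_63000000_def small_primes_def)

definition theta3_cert_63000000 :: certificate where
  "theta3_cert_63000000 = Omega_Cut 9"

lemma theta3_cert_63000000_ok: "cert_ok 2 1 63000000 theta3_cert_63000000 small_primes 200000 3 1"
  by (simp add: theta3_cert_63000000_def small_primes_def)

section \<open>Soundness of the certificates\<close>

definition rough :: "nat \<Rightarrow> nat \<Rightarrow> bool" where
  "rough q N \<longleftrightarrow> (\<forall>p\<in>prime_factors N. q \<le> p)"

lemma prime_factors_prime_power_mult:
  fixes q M :: nat
  assumes "prime q" "0 < M" "0 < a"
  shows "prime_factors (q ^ a * M) = insert q (prime_factors M)"
proof -
  have "prime_factors (q ^ a) = {q}"
    using assms by (simp add: prime_factorization_prime_power)
  then show ?thesis
    using prime_factors_product[of "q ^ a" M] assms by (auto simp: prime_gt_0_nat)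
qed

lemma theta_prime_power_mult:
  assumes q: "prime q" and M: "0 < M" "\<not> q dvd M" and a: "0 < a"
  shows "theta K e (q ^ a * M) = real K * real q ^ e / (real q ^ a * (real q + 1) ^ e) * theta K e M"
proof -
  have pf: "prime_factors (q ^ a * M) = insert q (prime_factors M)"
    by (rule prime_factors_prime_power_mult[OF q M(1) a])
  have q_new: "q \<notin> prime_factors M"
    using M(2) by auto
  have omega_qM: "omega (q ^ a * M) = Suc (omega M)"
    using q_new by (simp add: omega_def pf)
  have psi_qM: "psi_factor (q ^ a * M) = (real q + 1) / real q * psi_factor M"
    unfolding psi_factor_def pf using q_new prime_gt_0_nat[OF q] by (simp add: field_simps)
  have "theta K e (q ^ a * M) = real K * real K ^ omega M /
      (real q ^ a * real M * (((real q + 1) / real q) ^ e * psi_factor M ^ e))"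
    unfolding theta_def omega_qM psi_qM power_mult_distrib by simp
  also have "\<dots> = real K * real q ^ e / (real q ^ a * (real q + 1) ^ e) * theta K e M"
    using prime_gt_0_nat[OF q] M(1) psi_factor_ge_1[of M]
    by (simp add: theta_def power_divide field_simps)
  finally show ?thesis .
qed

lemma theta_prime_power_mult_le:
  assumes "prime q" "0 < M" "\<not> q dvd M" "0 < a" "a \<le> m"
    and "real (A * K * q ^ e) * theta K e M \<le> real (B * q ^ a * Suc q ^ e)"
  shows "real A * theta K e (q ^ m * M) \<le> real B"
proof -
  have q: "0 < real q" "0 < real q + 1"
    using prime_gt_0_nat[OF assms(1)] by auto
  have "real A * theta K e (q ^ m * M)
      = real (A * K * q ^ e) * theta K e M / (real q ^ m * (real q + 1) ^ e)"
    using theta_prime_power_mult[OF assms(1-3), of m] assms(4,5) by simp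
  also have "\<dots> \<le> real (A * K * q ^ e) * theta K e M / (real q ^ a * (real q + 1) ^ e)"
    using q assms(5) prime_gt_1_nat[OF assms(1)]
    by (intro divide_left_mono mult_right_mono power_increasing mult_nonneg_nonneg theta_nonneg)
       auto
  also have "\<dots> \<le> real B"
    using assms(6) q by (simp add: divide_le_eq add.commute)
  finally show ?thesis .
qed

lemma prime_power_cofactor:
  fixes q M :: nat
  assumes "prime q" "0 < M" "rough q M"
  obtains m M' where "m = multiplicity q M" "M = q ^ m * M'" "0 < M'" "\<not> q dvd M'"
    "rough (Suc q) M'"
proof -
  have "M \<noteq> 0" "\<not> is_unit q"
    using assms not_prime_unit by auto
  then obtain M' where M': "M = q ^ multiplicity q M * M'" "\<not> q dvd M'"
    using multiplicity_decompose'[of M q] by blast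
  then have "0 < M'"
    using assms(2) by (cases "M' = 0") auto
  have sub: "prime_factors M' \<subseteq> prime_factors M"
    using prime_factors_product[of "q ^ multiplicity q M" M'] M'(1) \<open>0 < M'\<close> assms(1,2)
    by (metis Un_upper2 less_not_refl2 mult_eq_0_iff)
  have "rough (Suc q) M'"
    unfolding rough_def
  proof
    fix p assume p: "p \<in> prime_factors M'"
    then have "q \<le> p"
      using sub assms(3) by (auto simp: rough_def)
    moreover have "p \<noteq> q"
      using p M'(2) by auto
    ultimately show "Suc q \<le> p"
      by simp
  qed
  with M' \<open>0 < M'\<close> show ?thesis
    using that[OF refl] by blast
qed

lemma consecutive_primes_ConsD: "consecutive_primes (q # ps) \<Longrightarrow> prime q \<and> consecutive_primes ps"
  by (cases ps) auto

lemma consecutive_primes_next_le: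
  "consecutive_primes (q # q' # ps) \<Longrightarrow> prime p \<Longrightarrow> q < p \<Longrightarrow> q' \<le> p"
  by (rule ccontr) auto

lemma rough_next_prime:
  assumes "consecutive_primes (q # q' # ps)" "rough (Suc q) M"
  shows "rough q' M"
  unfolding rough_def
proof
  fix p assume p: "p \<in> prime_factors M"
  then have "prime p" "q < p"
    using assms(2) by (auto simp: rough_def dest: in_prime_factors_imp_prime)
  then show "q' \<le> p"
    by (rule consecutive_primes_next_le[OF assms(1)])
qed

lemma pow_card_le_prod_Suc:
  "(\<forall>p\<in>S. b \<le> p) \<Longrightarrow> Suc b ^ card S \<le> (\<Prod>p\<in>S. Suc p)"
  using prod_mono[of S "\<lambda>_. Suc b" Suc] by simp

lemma prod_Suc_ge_consecutive_primes:
  assumes "finite S"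
  shows "consecutive_primes L \<Longrightarrow> \<forall>p\<in>S. prime p \<and> hd L \<le> p \<Longrightarrow> n \<le> length L \<Longrightarrow>
    n \<le> card S \<Longrightarrow> prod_list (map Suc (take n L)) * Suc (hd L) ^ (card S - n) \<le> (\<Prod>p\<in>S. Suc p)"
  using assms
proof (induction S arbitrary: L n rule: finite_linorder_min_induct)
  case empty
  then show ?case
    by simp
next
  case (insert b A)
  have "b \<notin> A" and card: "card (insert b A) = Suc (card A)"
    using insert.hyps by auto
  show ?case
  proof (cases n)
    case 0
    then show ?thesis
      using pow_card_le_prod_Suc[of "insert b A" "hd L"] insert.prems(2) by simp
  next
    case (Suc n')
    then obtain q L' where L: "L = q # L'"
      using insert.prems(3) by (cases L) auto
    have "q \<le> b"
      using insert.prems(2) L by simp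
    have A_gt: "prime p \<and> q < p" if "p \<in> A" for p
      using that insert.prems(2) insert.hyps(2) \<open>q \<le> b\<close> by fastforce
    have "prod_list (map Suc (take n' L')) * Suc q ^ (card A - n') \<le> (\<Prod>p\<in>A. Suc p)"
    proof (cases L')
      case Nil
      then have "n' = 0"
        using insert.prems(3) L Suc by simp
      moreover have "Suc q ^ card A \<le> (\<Prod>p\<in>A. Suc p)"
        using A_gt by (intro pow_card_le_prod_Suc) (simp add: less_imp_le)
      ultimately show ?thesis
        by simp
    next
      case (Cons q' L'')
      have "prime p \<and> q' \<le> p" if "p \<in> A" for p
        using A_gt[OF that] consecutive_primes_next_le[of q q' L'' p] insert.prems(1) L Cons by simp
      moreover have "consecutive_primes L'"
        using consecutive_primes_ConsD insert.prems(1) L by blast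
      moreover have "n' \<le> length L'" "n' \<le> card A"
        using insert.prems(3,4) L Suc card by auto
      ultimately have "prod_list (map Suc (take n' L')) * Suc q' ^ (card A - n') \<le> (\<Prod>p\<in>A. Suc p)"
        using insert.IH[of L' n'] Cons by simp
      moreover have "Suc q ^ (card A - n') \<le> Suc q' ^ (card A - n')"
        using insert.prems(1) L Cons by (intro power_mono) auto
      ultimately show ?thesis
        using mult_le_mono2 order_trans by blast
    qed
    then have "Suc q * (prod_list (map Suc (take n' L')) * Suc q ^ (card A - n'))
        \<le> Suc b * (\<Prod>p\<in>A. Suc p)"
      using \<open>q \<le> b\<close> by (intro mult_le_mono) auto
    then show ?thesis
      using L Suc card insert.hyps(1) \<open>b \<notin> A\<close> by (simp add: algebra_simps)
  qed
qed

lemma theta_le_many_factors: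
  assumes L: "consecutive_primes (q # ps)" and M: "0 < M" "rough q M"
    and "1 \<le> e" "K \<le> Suc q" "j \<le> omega M" "j \<le> Suc (length ps)"
  shows "theta K e M \<le> real K ^ j / real (prod_list (map Suc (take j (q # ps))))"
proof -
  let ?P = "real (prod_list (map Suc (take j (q # ps))))"
  let ?k = "omega M - j"
  have "prod_list (map Suc (take j (q # ps))) \<noteq> 0"
    by (simp add: prod_list_zero_iff)
  then have P_pos: "0 < ?P"
    by simp
  have "prod_list (map Suc (take j (q # ps))) * Suc q ^ ?k \<le> (\<Prod>p\<in>prime_factors M. Suc p)"
    using prod_Suc_ge_consecutive_primes[OF _ L, of "prime_factors M" j] M(2) assms(6,7)
    by (auto simp: rough_def omega_def)
  then have "real (prod_list (map Suc (take j (q # ps))) * Suc q ^ ?k)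
      \<le> real (\<Prod>p\<in>prime_factors M. Suc p)"
    by (simp only: of_nat_le_iff)
  then have P_le: "?P * (real q + 1) ^ ?k \<le> (\<Prod>p\<in>prime_factors M. real p + 1)"
    by (simp add: add.commute)
  have "theta K e M \<le> real K ^ omega M / (\<Prod>p\<in>prime_factors M. real p + 1)"
    by (rule theta_le_prod_Suc[OF M(1) assms(4)])
  also have "\<dots> \<le> real K ^ omega M / (?P * (real q + 1) ^ ?k)"
    using P_le P_pos by (intro divide_left_mono mult_pos_pos prod_pos) auto
  also have "\<dots> = real K ^ j / ?P * (real K ^ ?k / (real q + 1) ^ ?k)"
    using assms(6) by (simp flip: power_add)
  also have "\<dots> \<le> real K ^ j / ?P"
  proof (rule mult_left_le)
    have "real K ^ ?k \<le> (real q + 1) ^ ?k"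
      using assms(5) by (intro power_mono) auto
    then show "real K ^ ?k / (real q + 1) ^ ?k \<le> 1"
      by (simp add: divide_le_eq)
  qed (use P_pos in simp)
  finally show ?thesis .
qed

lemma omega_eq_0_iff:
  assumes "0 < N"
  shows "omega N = 0 \<longleftrightarrow> N = 1"
  using assms by (auto simp: omega_def prime_factorization_empty_iff)

lemma theta_le_few_factors:
  assumes "omega M \<le> i" "1 \<le> K"
  shows "theta K e M \<le> real K ^ i / real M"
proof -
  have "real K ^ omega M \<le> real K ^ i"
    using assms by (intro power_increasing) auto
  then have "real K ^ omega M / real M \<le> real K ^ i / real M"
    by (rule divide_right_mono) simp
  with theta_le_omega_div[of K e M] show ?thesis
    by linarith
qed

lemma mult_le_if_le_divide:
  fixes t x y a b :: real
  assumes "t \<le> x / y" "0 < y" "a * x \<le> b * y" "0 \<le> a"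
  shows "a * t \<le> b"
proof -
  have "a * t \<le> a * x / y"
    using mult_left_mono[OF assms(1,4)] by simp
  also have "\<dots> \<le> b"
    using assms(2,3) by (simp add: divide_le_eq)
  finally show ?thesis .
qed

lemma cert_ok_Omega_Cut_sound:
  assumes ok: "cert_ok K e T (Omega_Cut j) (q # ps) A B N0"
    and L: "consecutive_primes (q # ps)" and K: "1 \<le> K" and e: "1 \<le> e" and "0 < N0"
    and M: "0 < M" "rough q M" "T \<le> N0 * M"
  shows "real A * theta K e M \<le> real B"
proof (cases "j \<le> omega M")
  case True
  let ?P = "prod_list (map Suc (take j (q # ps)))"
  have "?P \<noteq> 0"
    by (simp add: prod_list_zero_iff)
  then have "0 < real ?P"
    by simp
  moreover have "theta K e M \<le> real K ^ j / real ?P"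
    using ok True by (intro theta_le_many_factors[OF L M(1,2) e]) auto
  moreover have "real A * real K ^ j \<le> real B * real ?P"
    using ok by (simp flip: of_nat_mult of_nat_power)
  ultimately show ?thesis
    using mult_le_if_le_divide by simp
next
  case False
  then obtain i where j: "j = Suc i" and few: "omega M \<le> i"
    by (cases j) auto
  show ?thesis
  proof (cases i)
    case 0
    then have "M = 1"
      using few omega_eq_0_iff[OF M(1)] by simp
    then show ?thesis
      using ok j 0 M(3) by simp
  next
    case (Suc i')
    then have "A * K ^ i * N0 \<le> B * T"
      using ok j by simp
    also have "\<dots> \<le> B * M * N0"
      using M(3) by (simp add: mult.commute mult.left_commute)
    finally have "real A * real K ^ i \<le> real B * real M"
      using \<open>0 < N0\<close> by (simp flip: of_nat_mult of_nat_power)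
    then show ?thesis
      using mult_le_if_le_divide[OF theta_le_few_factors[OF few K]] M(1) by simp
  qed
qed

lemma branches_ok_Nil_sound:
  assumes ok: "branches_ok K e T [] q ps A B N0 a" and q: "prime q" and e: "1 \<le> e"
    and M: "0 < M" "rough q M" "a \<le> multiplicity q M"
  shows "real A * theta K e M \<le> real B"
proof -
  obtain m M' where m: "m = multiplicity q M" and M': "M = q ^ m * M'" "0 < M'" "\<not> q dvd M'"
    "rough (Suc q) M'"
    using prime_power_cofactor[OF q M(1,2)] by blast
  have "K \<le> p + 1" if "p \<in> prime_factors M'" for p
  proof -
    have "Suc q \<le> p"
      using that M'(4) by (simp add: rough_def)
    then show ?thesis
      using ok by simp
  qed
  then have "theta K e M' \<le> 1"
    using theta_le_1[OF M'(2) e] by blast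
  then have "real (A * K * q ^ e) * theta K e M' \<le> real (A * K * q ^ e)"
    by (simp add: mult_left_le)
  also have "\<dots> \<le> real (B * q ^ a * Suc q ^ e)"
    using ok by (simp only: of_nat_le_iff) simp
  finally have "real A * theta K e (q ^ m * M') \<le> real B"
    using ok M(3) m by (intro theta_prime_power_mult_le[OF q M'(2,3)]) auto
  then show ?thesis
    using M'(1) by simp
qed

lemma cert_ok_sound:
  shows "cert_ok K e T c L A B N0 \<Longrightarrow> consecutive_primes L \<Longrightarrow> 1 \<le> K \<Longrightarrow> 1 \<le> e \<Longrightarrow> 0 < N0 \<Longrightarrow>
      0 < M \<Longrightarrow> rough (hd L) M \<Longrightarrow> T \<le> N0 * M \<Longrightarrow> real A * theta K e M \<le> real B"
    and "branches_ok K e T cs q ps A B N0 a \<Longrightarrow> consecutive_primes (q # ps) \<Longrightarrow> 1 \<le> K \<Longrightarrow>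
      1 \<le> e \<Longrightarrow> 0 < N0 \<Longrightarrow> 0 < M \<Longrightarrow> rough q M \<Longrightarrow> a \<le> multiplicity q M \<Longrightarrow>
      T \<le> N0 * M \<Longrightarrow> real A * theta K e M \<le> real B"
proof (induction K e T c L A B N0 and K e T cs q ps A B N0 a arbitrary: M and M
    rule: cert_ok_branches_ok.induct)
  case (1 K e T c A B N0)
  then show ?case
    by simp
next
  case (2 K e T j q ps A B N0)
  then show ?case
    by (intro cert_ok_Omega_Cut_sound) auto
next
  case (3 K e T cs q ps A B N0)
  then show ?case
    by simp
next
  case (4 K e T q ps A B N0 a)
  have "prime q"
    using "4.prems"(2) consecutive_primes_ConsD by blast
  then show ?case
    by (rule branches_ok_Nil_sound[OF "4.prems"(1) _ "4.prems"(4,6-8)])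
next
  case (5 K e T c cs q ps A B N0 a)
  have q: "prime q" and ps_primes: "consecutive_primes ps"
    using "5.prems"(2) consecutive_primes_ConsD by blast+
  obtain m M' where m: "m = multiplicity q M" and M': "M = q ^ m * M'" "0 < M'" "\<not> q dvd M'"
    "rough (Suc q) M'"
    using prime_power_cofactor[OF q "5.prems"(6,7)] by blast
  show ?case
  proof (cases "a < m")
    case True
    show ?thesis
      by (rule "5.IH"(3)) (use "5.prems" True m in auto)
  next
    case False
    then have "a = m"
      using "5.prems"(8) m by simp
    have c_ok: "if a = 0 then cert_ok K e T c ps A B N0
        else cert_ok K e T c ps (A * K * q ^ e) (B * q ^ a * Suc q ^ e) (N0 * q ^ a)"
      using "5.prems"(1) by simp
    then obtain q' ps' where ps: "ps = q' # ps'"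
      by (cases ps) (auto split: if_splits)
    have rough': "rough (hd ps) M'"
      using rough_next_prime[of q q' ps'] M'(4) "5.prems"(2) ps by simp
    show ?thesis
    proof (cases "a = 0")
      case True
      then have "M' = M"
        using M'(1) \<open>a = m\<close> by simp
      show ?thesis
        by (rule "5.IH"(1)) (use True c_ok ps_primes rough' \<open>M' = M\<close> "5.prems" in auto)
    next
      case False
      have "T \<le> N0 * q ^ a * M'"
        using "5.prems"(9) M'(1) \<open>a = m\<close> by (simp add: mult.assoc)
      then have "real (A * K * q ^ e) * theta K e M' \<le> real (B * q ^ a * Suc q ^ e)"
        using "5.IH"(2) False c_ok ps_primes rough' M'(2) "5.prems"(3-5) prime_gt_0_nat[OF q]
        by simp
      then have "real A * theta K e (q ^ m * M') \<le> real B"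
        using False \<open>a = m\<close> by (intro theta_prime_power_mult_le[OF q M'(2,3)]) auto
      then show ?thesis
        using M'(1) by simp
    qed
  qed
qed

lemma theta_le_by_certificate:
  assumes "cert_ok K e T c small_primes A B 1" "1 \<le> K" "1 \<le> e" "0 < A" "0 < N" "T \<le> N"
  shows "theta K e N \<le> real B / real A"
proof -
  have "rough (hd small_primes) N"
    by (auto simp: small_primes_def rough_def prime_ge_2_nat dest: in_prime_factors_imp_prime)
  then have "real A * theta K e N \<le> real B"
    using cert_ok_sound(1)[OF assms(1) consecutive_primes_small_primes] assms(2,3,5,6) by simp
  then show ?thesis
    using assms(4) by (simp add: field_simps)
qed

lemma certified_theta_bounds:
  assumes "cert_ok 4 2 T c1 small_primes A1 B1 1" "cert_ok 4 1 T c2 small_primes A2 B2 1"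
    "cert_ok 2 1 T c3 small_primes A3 B3 1"
    and "0 < A1" "0 < A2" "0 < A3" "0 < T"
    and "real B1 / real A1 \<le> x1 ^ 2" "0 \<le> x1" "real B2 / real A2 \<le> x2" "real B3 / real A3 \<le> x3"
  shows "\<forall>N\<ge>T. theta1 N \<le> x1 \<and> theta2 N \<le> x2 \<and> theta3 N \<le> x3"
proof (intro allI impI conjI)
  fix N assume "T \<le> N"
  then have N: "0 < N"
    using assms(7) by simp
  have "theta1 N = sqrt (theta 4 2 N)"
    by (rule theta1_eq_sqrt_theta[OF N])
  also have "\<dots> \<le> sqrt (x1 ^ 2)"
    using theta_le_by_certificate[OF assms(1) _ _ assms(4) N \<open>T \<le> N\<close>] assms(8)
    by (intro real_sqrt_le_mono) simp
  also have "\<dots> = x1"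
    using assms(9) by simp
  finally show "theta1 N \<le> x1" .
  show "theta2 N \<le> x2"
    using theta_le_by_certificate[OF assms(2) _ _ assms(5) N \<open>T \<le> N\<close>] assms(10)
    by (simp add: theta2_eq_theta)
  show "theta3 N \<le> x3"
    using theta_le_by_certificate[OF assms(3) _ _ assms(6) N \<open>T \<le> N\<close>] assms(11)
    by (simp add: theta3_eq_theta)
qed

lemma theta_bounds_ge_1: "\<forall>N\<ge>1. theta1 N \<le> 1.00 \<and> theta2 N \<le> 1.34 \<and> theta3 N \<le> 1.00"
  by (rule certified_theta_bounds[OF theta1_cert_1_ok theta2_cert_1_ok theta3_cert_1_ok])
     (simp_all add: power2_eq_square)

lemma theta_bounds_ge_43: "\<forall>N\<ge>43. theta1 N \<le> 0.465 \<and> theta2 N \<le> 0.445 \<and> theta3 N \<le> 0.0556"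
  by (rule certified_theta_bounds[OF theta1_cert_43_ok theta2_cert_43_ok theta3_cert_43_ok])
     (simp_all add: power2_eq_square)

lemma theta_bounds_ge_571: "\<forall>N\<ge>571. theta1 N \<le> 0.257 \<and> theta2 N \<le> 0.149 \<and> theta3 N \<le> 0.00926"
  by (rule certified_theta_bounds[OF theta1_cert_571_ok theta2_cert_571_ok theta3_cert_571_ok])
     (simp_all add: power2_eq_square)

lemma theta_bounds_ge_8800: "\<forall>N\<ge>8800. theta1 N \<le> 0.133 \<and> theta2 N \<le> 0.0424 \<and> theta3 N \<le> 0.00133"
  by (rule certified_theta_bounds[OF theta1_cert_8800_ok theta2_cert_8800_ok theta3_cert_8800_ok])
     (simp_all add: power2_eq_square)

lemma theta_bounds_ge_150000: "\<forall>N\<ge>150000. theta1 N \<le> 0.0607 \<and> theta2 N \<le> 0.00941 \<and> theta3 N \<le> 0.000147"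
  by (rule certified_theta_bounds[OF theta1_cert_150000_ok theta2_cert_150000_ok theta3_cert_150000_ok])
     (simp_all add: power2_eq_square)

lemma theta_bounds_ge_2700000: "\<forall>N\<ge>2700000. theta1 N \<le> 0.0265 \<and> theta2 N \<le> 0.00189 \<and> theta3 N \<le> 0.000015"
  by (rule certified_theta_bounds[OF theta1_cert_2700000_ok theta2_cert_2700000_ok theta3_cert_2700000_ok])
     (simp_all add: power2_eq_square)

lemma theta_bounds_ge_63000000: "\<forall>N\<ge>63000000. theta1 N \<le> 0.0106 \<and> theta2 N \<le> 0.000314 \<and> theta3 N \<le> 0.000015"
  by (rule certified_theta_bounds[OF theta1_cert_63000000_ok theta2_cert_63000000_ok theta3_cert_63000000_ok])
     (simp_all add: power2_eq_square)

theorem lemma3p1: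
  shows "theta1 \<longlonglongrightarrow> 0 \<and> theta2 \<longlonglongrightarrow> 0 \<and> theta3 \<longlonglongrightarrow> 0
    \<and> (\<forall>N\<ge>1. theta1 N \<le> 1.00 \<and> theta2 N \<le> 1.34 \<and> theta3 N \<le> 1.00)
    \<and> (\<forall>N\<ge>43. theta1 N \<le> 0.465 \<and> theta2 N \<le> 0.445 \<and> theta3 N \<le> 0.0556)
    \<and> (\<forall>N\<ge>571. theta1 N \<le> 0.257 \<and> theta2 N \<le> 0.149 \<and> theta3 N \<le> 0.00926)
    \<and> (\<forall>N\<ge>8800. theta1 N \<le> 0.133 \<and> theta2 N \<le> 0.0424 \<and> theta3 N \<le> 0.00133)
    \<and> (\<forall>N\<ge>150000. theta1 N \<le> 0.0607 \<and> theta2 N \<le> 0.00941 \<and> theta3 N \<le> 0.000147)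
    \<and> (\<forall>N\<ge>2700000. theta1 N \<le> 0.0265 \<and> theta2 N \<le> 0.00189 \<and> theta3 N \<le> 0.000015)
    \<and> (\<forall>N\<ge>63000000. theta1 N \<le> 0.0106 \<and> theta2 N \<le> 0.000314 \<and> theta3 N \<le> 0.000015)"
  using theta_limits theta_bounds_ge_1 theta_bounds_ge_43 theta_bounds_ge_571 theta_bounds_ge_8800
    theta_bounds_ge_150000 theta_bounds_ge_2700000 theta_bounds_ge_63000000
  by blast

end
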